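(* Let $(S,d)$ be a metric space and let $\bullet\in\{\mathrm{FM},\mathrm{BL}\}$. Then $E^S_\bullet$ is a weak$^*$-dense subset of $\operatorname{ext}(B^S_\bullet)$. If, additionally, $S$ is compact, then $E^S_\bullet$ is dense in $\operatorname{ext}(B^S_\bullet)$ with respect to the supremum norm $\|\cdot\|_\infty$.
   Context: $\mathrm{BL}(S)$ is the space of bounded real-valued Lipschitz functions on $S$. For a function $f$ on a metric space, $|f|_L=\sup_{x\neq y}|f(x)-f(y)|/d(x,y)$ is its Lipschitz constant, with the convention $|f|_L=0$ if the space is a singleton. Two norms on $\mathrm{BL}(S)$ are used: $\|f\|_{\mathrm{BL}}=\|f\|_\infty+|f|_L$ and $\|f\|_{\mathrm{FM}}=\max(\|f\|_\infty,|f|_L)$. $B^S_\bullet=\{f\in\mathrm{BL}(S):\|f\|_\bullet\le1\}$, and $\operatorname{ext}(C)$ denotes the set of extreme points of a convex set $C$. Any subset $P\subset S$ carries the restricted metric. Non-trivial extreme points: $\operatorname{ext}_*(B^P_\bullet)=\operatorname{ext}(B^P_\bullet)\setminus\{f\in B^P_\bullet: |f|=\mathbf{1}\}$. For non-empty $P\subset S$ and $f\in\mathrm{BL}(P)$ let $\mathcal{E}^{S,0}_P f(x)=\sup_{p\in P}[f(p)-|f|_L d(p,x)]$ for $x\in S$, and $\mathcal{E}^S_P f=\max(\mathcal{E}^{S,0}_P f,-\|f\|_\infty)$. Define $E^S_{\mathrm{BL}}=\bigcup_{P\subset S\text{ finite}}\mathcal{E}^S_P(\operatorname{ext}_*(B^P_{\mathrm{BL}}))\cup\{\mathbf{1},-\mathbf{1}\}$,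 and $E^S_{\mathrm{FM}}=\bigcup_{P\subset S\text{ finite}}\mathcal{E}^S_P(\operatorname{ext}_*(B^P_{\mathrm{FM}}))\cup\{f\in B^S_{\mathrm{FM}}:|f|=\mathbf{1}\}\cup\{h_P: P\subset S\text{ finite, non-empty}\}$, where $h_P(x)=\max\big(-1,\sup_{p\in P}[1-d(x,p)]\big)$. The weak$^*$ topology on $\mathrm{BL}(S)$ is the weak topology $\sigma(\mathrm{BL}(S),X)$, where $X$ is the closure, in the dual of $(\mathrm{BL}(S),\|\cdot\|_\bullet)$ with dual norm, of the linear span of the point evaluations $f\mapsto f(x)$, $x\in S$ (so that $\mathrm{BL}(S)$ with norm $\|\cdot\|_\bullet$ is the dual of $X$, and $f\mapsto f(x)$ are continuous). *)

theory Defs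
  imports "HOL-Analysis.Analysis"
begin

text \<open>Functions on a subset A of a metric space are represented as total functions
  'a => real that vanish outside A (extensional representation).\<close>

definition supn :: "'a set \<Rightarrow> ('a \<Rightarrow> real) \<Rightarrow> real" where
  "supn A f = (if A = {} then 0 else (SUP x\<in>A. \<bar>f x\<bar>))"

definition lipc :: "'a::metric_space set \<Rightarrow> ('a \<Rightarrow> real) \<Rightarrow> real" where
  "lipc A f = (if \<exists>x\<in>A. \<exists>y\<in>A. x \<noteq> y
     then (SUP p\<in>{(x,y). x \<in> A \<and> y \<in> A \<and> x \<noteq> y}. \<bar>f (fst p) - f (snd p)\<bar> / dist (fst p) (snd p))
     else 0)"

definition BLsp :: "'a::metric_space set \<Rightarrow> ('a \<Rightarrow> real) set" where
  "BLsp A = {f. (\<forall>x. x \<notin> A \<longrightarrow> f x = 0) \<and> bounded (f ` A) \<and>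
              (\<exists>L. \<forall>x\<in>A. \<forall>y\<in>A. \<bar>f x - f y\<bar> \<le> L * dist x y)}"

datatype bl_norm = FM | BL

definition bnorm :: "bl_norm \<Rightarrow> 'a::metric_space set \<Rightarrow> ('a \<Rightarrow> real) \<Rightarrow> real" where
  "bnorm N A f = (case N of FM \<Rightarrow> max (supn A f) (lipc A f) | BL \<Rightarrow> supn A f + lipc A f)"

definition ballB :: "bl_norm \<Rightarrow> 'a::metric_space set \<Rightarrow> ('a \<Rightarrow> real) set" where
  "ballB N A = {f \<in> BLsp A. bnorm N A f \<le> 1}"

definition extp :: "('a \<Rightarrow> real) set \<Rightarrow> ('a \<Rightarrow> real) set" where
  "extp C = {f \<in> C. \<forall>g\<in>C. \<forall>h\<in>C. \<forall>t::real. 0 < t \<and> t < 1 \<and>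
                f = (\<lambda>x. t * g x + (1 - t) * h x) \<longrightarrow> g = h}"

definition ext_star :: "bl_norm \<Rightarrow> 'a::metric_space set \<Rightarrow> ('a \<Rightarrow> real) set" where
  "ext_star N A = extp (ballB N A) - {f \<in> ballB N A. \<forall>x\<in>A. \<bar>f x\<bar> = 1}"

definition ext_op :: "'a::metric_space set \<Rightarrow> 'a set \<Rightarrow> ('a \<Rightarrow> real) \<Rightarrow> ('a \<Rightarrow> real)" where
  "ext_op S P f = (\<lambda>x. if x \<in> S then
      max (Max ((\<lambda>p. f p - lipc P f * dist p x) ` P)) (- supn P f) else 0)"

definition oneS :: "'a set \<Rightarrow> ('a \<Rightarrow> real)" where
  "oneS S = (\<lambda>x. if x \<in> S then 1 else 0)"

definition hP :: "'a::metric_space set \<Rightarrow> 'a set \<Rightarrow> ('a \<Rightarrow> real)" where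
  "hP S P = (\<lambda>x. if x \<in> S then max (-1) (Max ((\<lambda>p. 1 - dist x p) ` P)) else 0)"

definition E_set :: "bl_norm \<Rightarrow> 'a::metric_space set \<Rightarrow> ('a \<Rightarrow> real) set" where
  "E_set N S = (case N of
     BL \<Rightarrow> (\<Union>P\<in>{P. finite P \<and> P \<subseteq> S}. ext_op S P ` ext_star BL P) \<union> {oneS S, (\<lambda>x. - oneS S x)}
   | FM \<Rightarrow> (\<Union>P\<in>{P. finite P \<and> P \<subseteq> S}. ext_op S P ` ext_star FM P)
           \<union> {f \<in> ballB FM S. \<forall>x\<in>S. \<bar>f x\<bar> = 1}
           \<union> {hP S P | P. finite P \<and> P \<noteq> {} \<and> P \<subseteq> S})"

text \<open>The predual X: closure, in the dual norm of (BL(S), norm N), of the span of point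
  evaluations.\<close>
definition predual :: "bl_norm \<Rightarrow> 'a::metric_space set \<Rightarrow> (('a \<Rightarrow> real) \<Rightarrow> real) set" where
  "predual N S = {\<phi>.
     (\<forall>f\<in>BLsp S. \<forall>g\<in>BLsp S. \<phi> (\<lambda>x. f x + g x) = \<phi> f + \<phi> g) \<and>
     (\<forall>f\<in>BLsp S. \<forall>a::real. \<phi> (\<lambda>x. a * f x) = a * \<phi> f) \<and>
     (\<exists>C. \<forall>f\<in>ballB N S. \<bar>\<phi> f\<bar> \<le> C) \<and>
     (\<forall>\<epsilon>>0. \<exists>F c. finite F \<and> F \<subseteq> S \<and>
         (\<forall>f\<in>ballB N S. \<bar>\<phi> f - (\<Sum>y\<in>F. c y * f y)\<bar> \<le> \<epsilon>))}"

text \<open>D is weak*-dense in T: every point of T lies in the sigma(BL(S),X)-closure of D,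
  i.e. every basic weak* neighbourhood of it meets D.\<close>
definition wstar_dense_in :: "bl_norm \<Rightarrow> 'a::metric_space set \<Rightarrow> ('a \<Rightarrow> real) set \<Rightarrow> ('a \<Rightarrow> real) set \<Rightarrow> bool" where
  "wstar_dense_in N S D T \<longleftrightarrow> (\<forall>f\<in>T. \<forall>\<Phi>. finite \<Phi> \<and> \<Phi> \<subseteq> predual N S \<longrightarrow>
      (\<forall>\<epsilon>>0. \<exists>g\<in>D. \<forall>\<phi>\<in>\<Phi>. \<bar>\<phi> g - \<phi> f\<bar> < \<epsilon>))"

definition sup_dense_in :: "'a set \<Rightarrow> ('a \<Rightarrow> real) set \<Rightarrow> ('a \<Rightarrow> real) set \<Rightarrow> bool" where
  "sup_dense_in S D T \<longleftrightarrow> (\<forall>f\<in>T. \<forall>\<epsilon>>0. \<exists>g\<in>D. \<forall>x\<in>S. \<bar>f x - g x\<bar> < \<epsilon>)"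

end

theory Submission
  imports Defs
begin

text \<open>Every element of \<open>E\<^sub>S\<close> is the least element of \<open>B\<^sub>S\<close> with prescribed values on a finite set \<open>P\<close>
  (or takes only the values \<open>\<plusminus>1\<close>), where these values form an extreme point of \<open>B\<^sub>P\<close>; a convex
  decomposition must then agree with it on \<open>P\<close> and dominate it everywhere, so it is extreme.

  Conversely let \<open>f\<close> be extreme and \<open>F \<subseteq> S\<close> finite. For finite \<open>P\<close> the ball \<open>B\<^sub>P\<close> is a polytope, so
  \<open>f\<close> restricted to \<open>P\<close> is a convex combination of extreme points of \<open>B\<^sub>P\<close>, each the restriction of an
  element of \<open>E\<^sub>S\<close>. Rounding the values of these elements on \<open>F\<close> to a grid of mesh \<open>r\<close> groups them into
  finitely many cells, and compactness of a product of intervals turns these decompositions into one valid on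
  all of \<open>S\<close>: \<open>f\<close> is a convex combination of finitely many elements of \<open>B\<^sub>S\<close>, each \<open>r\<close>-close on \<open>F\<close>
  to \<open>E\<^sub>S\<close>. Being extreme, \<open>f\<close> equals one of them. Weak* density follows since predual functionals are
  uniformly approximated on \<open>B\<^sub>S\<close> by combinations of point evaluations, and sup-norm density on compact
  \<open>S\<close> since all elements of \<open>B\<^sub>S\<close> are 1-Lipschitz.\<close>

section \<open>The unit balls described pointwise\<close>

lemma BLsp_abs_bdd_above:
  assumes "f \<in> BLsp A" shows "bdd_above ((\<lambda>x. \<bar>f x\<bar>) ` A)"
proof -
  from assms have "bounded (f ` A)" by (simp add: BLsp_def)
  then obtain B where "\<forall>y\<in>f ` A. norm y \<le> B" by (auto simp: bounded_iff)
  then show ?thesis by (auto simp: bdd_above_def)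
qed

lemma abs_le_supn:
  assumes "f \<in> BLsp A" "x \<in> A" shows "\<bar>f x\<bar> \<le> supn A f"
  using assms BLsp_abs_bdd_above[OF assms(1)] by (auto simp: supn_def intro: cSUP_upper)

lemma supn_le:
  assumes "\<And>x. x \<in> A \<Longrightarrow> \<bar>f x\<bar> \<le> c" "0 \<le> c" shows "supn A f \<le> c"
  using assms by (auto simp: supn_def intro: cSUP_least)

lemma supn_nonneg:
  assumes "f \<in> BLsp A" shows "0 \<le> supn A f"
  using abs_le_supn[OF assms] by (cases "A = {}") (auto simp: supn_def intro: order_trans[OF abs_ge_zero])

lemma BLsp_slope_bdd_above:
  assumes "f \<in> BLsp A"
  shows "bdd_above ((\<lambda>p. \<bar>f (fst p) - f (snd p)\<bar> / dist (fst p) (snd p)) ` {(x,y). x \<in> A \<and> y \<in> A \<and> x \<noteq> y})"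
proof -
  from assms obtain L where L: "\<forall>x\<in>A. \<forall>y\<in>A. \<bar>f x - f y\<bar> \<le> L * dist x y" by (auto simp: BLsp_def)
  have "\<bar>f a - f b\<bar> / dist a b \<le> L" if "a \<in> A" "b \<in> A" "a \<noteq> b" for a b
    using L that by (simp add: divide_le_eq)
  then show ?thesis by (auto simp: bdd_above_def)
qed

lemma slope_le_lipc:
  assumes "f \<in> BLsp A" "a \<in> A" "b \<in> A" "a \<noteq> b"
  shows "\<bar>f a - f b\<bar> / dist a b \<le> lipc A f"
  using assms BLsp_slope_bdd_above[OF assms(1)]
  by (auto simp: lipc_def intro!: cSUP_upper2[where x = "(a, b)"])

lemma lipc_le:
  assumes "\<And>a b. a \<in> A \<Longrightarrow> b \<in> A \<Longrightarrow> a \<noteq> b \<Longrightarrow> \<bar>f a - f b\<bar> / dist a b \<le> c" "0 \<le> c"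
  shows "lipc A f \<le> c"
  using assms unfolding lipc_def by (auto intro!: cSUP_least)

lemma lipc_nonneg:
  assumes "f \<in> BLsp A" shows "0 \<le> lipc A f"
proof (cases "\<exists>x\<in>A. \<exists>y\<in>A. x \<noteq> y")
  case True
  then obtain a b where "a \<in> A" "b \<in> A" "a \<noteq> b" by auto
  then show ?thesis using slope_le_lipc[OF assms] by (meson divide_nonneg_nonneg abs_ge_zero zero_le_dist order_trans)
qed (simp add: lipc_def)

lemma abs_diff_le_lipc:
  assumes "f \<in> BLsp A" "a \<in> A" "b \<in> A"
  shows "\<bar>f a - f b\<bar> \<le> lipc A f * dist a b"
  using slope_le_lipc[OF assms] lipc_nonneg[OF assms(1)]
  by (cases "a = b") (auto simp: divide_le_eq mult.commute)

definition norm_le :: "bl_norm \<Rightarrow> 'a::metric_space set \<Rightarrow> real \<Rightarrow> ('a \<Rightarrow> real) \<Rightarrow> bool" where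
  "norm_le N A m f \<longleftrightarrow> (\<forall>x\<in>A. \<bar>f x\<bar> \<le> m) \<and>
     (case N of FM \<Rightarrow> (\<forall>a\<in>A. \<forall>b\<in>A. \<bar>f a - f b\<bar> \<le> m * dist a b)
      | BL \<Rightarrow> (\<forall>x\<in>A. \<forall>a\<in>A. \<forall>b\<in>A. a \<noteq> b \<longrightarrow> \<bar>f x\<bar> + \<bar>f a - f b\<bar> / dist a b \<le> m))"

definition in_ball :: "bl_norm \<Rightarrow> 'a::metric_space set \<Rightarrow> ('a \<Rightarrow> real) \<Rightarrow> bool" where
  "in_ball N A f \<longleftrightarrow> (\<forall>x. x \<notin> A \<longrightarrow> f x = 0) \<and> norm_le N A 1 f"

lemma in_ball_vanishes: "in_ball N A f \<Longrightarrow> x \<notin> A \<Longrightarrow> f x = 0"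
  by (simp add: in_ball_def)

lemma in_ball_abs_le: "in_ball N A f \<Longrightarrow> \<bar>f x\<bar> \<le> 1"
  by (cases "x \<in> A") (auto simp: in_ball_def norm_le_def)

lemma in_ball_BL: "in_ball BL A f \<Longrightarrow> x \<in> A \<Longrightarrow> a \<in> A \<Longrightarrow> b \<in> A \<Longrightarrow> a \<noteq> b \<Longrightarrow>
   \<bar>f x\<bar> + \<bar>f a - f b\<bar> / dist a b \<le> 1"
  by (simp add: in_ball_def norm_le_def)

lemma in_ball_lipschitz:
  assumes "in_ball N A f" "x \<in> A" "y \<in> A" shows "\<bar>f x - f y\<bar> \<le> dist x y"
proof (cases N)
  case FM then show ?thesis using assms by (auto simp: in_ball_def norm_le_def)
next
  case BL
  show ?thesis
  proof (cases "x = y")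
    case False
    then have "\<bar>f x - f y\<bar> / dist x y \<le> 1"
      using in_ball_BL[OF assms(1)[unfolded BL] assms(2,2,3)] abs_ge_zero[of "f x"] by linarith
    then show ?thesis using False by (simp add: divide_le_eq)
  qed simp
qed

lemma in_ball_restrict:
  assumes "in_ball N S g" "P \<subseteq> S"
  shows "in_ball N P (\<lambda>x. if x \<in> P then g x else 0)"
  using assms unfolding in_ball_def norm_le_def by (cases N) (auto simp: subset_iff)

lemma in_ball_if_ballB:
  assumes "f \<in> ballB N A" shows "in_ball N A f"
proof -
  have B: "f \<in> BLsp A" and n: "bnorm N A f \<le> 1" using assms by (auto simp: ballB_def)
  have v: "\<forall>x. x \<notin> A \<longrightarrow> f x = 0" using B by (simp add: BLsp_def)
  note bounds = abs_le_supn[OF B] slope_le_lipc[OF B] abs_diff_le_lipc[OF B]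
    supn_nonneg[OF B] lipc_nonneg[OF B]
  have "norm_le N A 1 f"
  proof (cases N)
    case FM
    then have "supn A f \<le> 1" "lipc A f \<le> 1" using n by (auto simp: bnorm_def)
    then have "\<bar>f x\<bar> \<le> 1" "\<bar>f a - f b\<bar> \<le> 1 * dist a b" if "x \<in> A" "a \<in> A" "b \<in> A" for x a b
      using bounds(1)[OF that(1)] bounds(3)[OF that(2,3)] mult_right_mono[of "lipc A f" 1 "dist a b"]
      by auto
    then show ?thesis using FM unfolding norm_le_def by simp
  next
    case BL
    then have sl: "supn A f + lipc A f \<le> 1" using n by (auto simp: bnorm_def)
    have "\<bar>f x\<bar> \<le> 1" if "x \<in> A" for x
      using bounds(1)[OF that] bounds(5) sl by linarith
    moreover have "\<bar>f x\<bar> + \<bar>f a - f b\<bar> / dist a b \<le> 1"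
      if "x \<in> A" "a \<in> A" "b \<in> A" "a \<noteq> b" for x a b
      using bounds(1)[OF that(1)] bounds(2)[OF that(2-4)] sl by linarith
    ultimately show ?thesis using BL unfolding norm_le_def by simp
  qed
  then show ?thesis using v by (simp add: in_ball_def)
qed

lemma ballB_if_in_ball:
  assumes f: "in_ball N A f" shows "f \<in> ballB N A"
proof -
  have "\<forall>x\<in>A. norm (f x) \<le> 1" using in_ball_abs_le[OF f] by simp
  moreover have "\<forall>x\<in>A. \<forall>y\<in>A. \<bar>f x - f y\<bar> \<le> 1 * dist x y" using in_ball_lipschitz[OF f] by simp
  ultimately have B: "f \<in> BLsp A"
    using in_ball_vanishes[OF f] unfolding BLsp_def bounded_iff by blast
  have s1: "supn A f \<le> 1" using in_ball_abs_le[OF f] by (intro supn_le) auto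
  have "bnorm N A f \<le> 1"
  proof (cases N)
    case FM
    have "lipc A f \<le> 1" using in_ball_lipschitz[OF f] by (auto intro!: lipc_le simp: divide_le_eq)
    then show ?thesis using FM s1 by (simp add: bnorm_def)
  next
    case BL
    have "\<bar>f a - f b\<bar> / dist a b \<le> 1 - supn A f" if ab: "a \<in> A" "b \<in> A" "a \<noteq> b" for a b
    proof -
      have "\<bar>f x\<bar> \<le> 1 - \<bar>f a - f b\<bar> / dist a b" if "x \<in> A" for x
        using in_ball_BL[OF f[unfolded BL] that ab] by linarith
      moreover have "0 \<le> 1 - \<bar>f a - f b\<bar> / dist a b"
        using in_ball_BL[OF f[unfolded BL] ab(1) ab] abs_ge_zero[of "f a"] by linarith
      ultimately have "supn A f \<le> 1 - \<bar>f a - f b\<bar> / dist a b" by (rule supn_le)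
      then show ?thesis by simp
    qed
    then have "lipc A f \<le> 1 - supn A f" using s1 by (intro lipc_le) auto
    then show ?thesis using BL by (simp add: bnorm_def)
  qed
  then show ?thesis using B by (simp add: ballB_def)
qed

lemma ballB_eq: "ballB N A = {f. in_ball N A f}"
  using in_ball_if_ballB ballB_if_in_ball by blast

lemma in_ball_FM_I:
  assumes "\<And>x. x \<notin> A \<Longrightarrow> f x = 0" "\<And>x. x \<in> A \<Longrightarrow> \<bar>f x\<bar> \<le> 1"
    and "\<And>a b. a \<in> A \<Longrightarrow> b \<in> A \<Longrightarrow> \<bar>f a - f b\<bar> \<le> dist a b"
  shows "in_ball FM A f"
  using assms by (simp add: in_ball_def norm_le_def)

lemma in_ball_BL_I:
  assumes "\<And>x. x \<notin> A \<Longrightarrow> f x = 0" "\<And>x. x \<in> A \<Longrightarrow> \<bar>f x\<bar> \<le> 1"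
    and "\<And>x a b. x \<in> A \<Longrightarrow> a \<in> A \<Longrightarrow> b \<in> A \<Longrightarrow> a \<noteq> b \<Longrightarrow> \<bar>f x\<bar> + \<bar>f a - f b\<bar> / dist a b \<le> 1"
  shows "in_ball BL A f"
  using assms by (simp add: in_ball_def norm_le_def)

section \<open>Extreme points of the unit balls\<close>

lemma convex_comb_eq_if_le:
  fixes t F g h :: real
  assumes "0 < t" "t < 1" "F = t * g + (1 - t) * h" "F \<le> g" "F \<le> h"
  shows "g = F" "h = F"
proof -
  have "t * (g - F) + (1 - t) * (h - F) = 0" using assms(3) by (simp add: algebra_simps)
  moreover have "t * (g - F) \<ge> 0" "(1 - t) * (h - F) \<ge> 0" using assms by simp_all
  ultimately have "t * (g - F) = 0" "(1 - t) * (h - F) = 0" by linarith+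
  then show "g = F" "h = F" using assms(1,2) by auto
qed

lemma convex_comb_eq_if_ge:
  fixes t F g h :: real
  assumes "0 < t" "t < 1" "F = t * g + (1 - t) * h" "g \<le> F" "h \<le> F"
  shows "g = F" "h = F"
proof -
  have "t * (F - g) + (1 - t) * (F - h) = 0" using assms(3) by (simp add: algebra_simps)
  moreover have "t * (F - g) \<ge> 0" "(1 - t) * (F - h) \<ge> 0" using assms by simp_all
  ultimately have "t * (F - g) = 0" "(1 - t) * (F - h) = 0" by linarith+
  then show "g = F" "h = F" using assms(1,2) by auto
qed

lemma extpI:
  assumes "f \<in> C"
    and "\<And>g h t. g \<in> C \<Longrightarrow> h \<in> C \<Longrightarrow> 0 < t \<Longrightarrow> t < 1 \<Longrightarrow>
           (\<And>x. f x = t * g x + (1 - t) * h x) \<Longrightarrow> g = h"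
  shows "f \<in> extp C"
proof -
  have "g = h" if "g \<in> C" "h \<in> C" "0 < t" "t < 1" "f = (\<lambda>x. t * g x + (1 - t) * h x)" for g h t
    using assms(2)[OF that(1-4)] that(5) by simp
  then show ?thesis using assms(1) unfolding extp_def by blast
qed

lemma extpD:
  assumes "f \<in> extp C" "g \<in> C" "h \<in> C" "0 < t" "t < 1" "\<And>x. f x = t * g x + (1 - t) * h x"
  shows "g = h"
  using assms unfolding extp_def by (auto simp: fun_eq_iff)

lemma extp_mem: "f \<in> extp C \<Longrightarrow> f \<in> C"
  by (simp add: extp_def)

lemma extp_perturbation_eq_0:
  assumes "f \<in> extp C" "(\<lambda>x. f x + u x) \<in> C" "(\<lambda>x. f x - u x) \<in> C"
  shows "u x = 0"
proof -
  have "(\<lambda>x. f x + u x) = (\<lambda>x. f x - u x)"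
    by (rule extpD[OF assms(1-3), of "1/2"]) (simp_all add: field_simps)
  then have "f x + u x = f x - u x" by (rule fun_cong)
  then show ?thesis by simp
qed

lemma extp_ballB_in_ball: "f \<in> extp (ballB N A) \<Longrightarrow> in_ball N A f"
  using extp_mem ballB_eq by blast

lemma in_ball_unimodular: "in_ball N A (\<lambda>x. c * oneS A x)" if "\<bar>c\<bar> = 1"
  using that by (cases N) (auto simp: in_ball_def norm_le_def oneS_def)

text \<open>Extreme points of \<open>B\<^sub>P\<close> cannot be shifted by a constant, so their sup norm is as large as
  the Lipschitz part of the norm allows.\<close>

lemma extp_not_constant_shift:
  assumes "f \<in> extp (ballB N P)" "x0 \<in> P" "0 < c"
    and "\<And>s. \<bar>s\<bar> = 1 \<Longrightarrow> in_ball N P (\<lambda>x. f x + s * c * oneS P x)"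
  shows False
proof -
  have "(\<lambda>x. f x + c * oneS P x) \<in> ballB N P" "(\<lambda>x. f x - c * oneS P x) \<in> ballB N P"
    using assms(4)[of 1] assms(4)[of "-1"] by (simp_all add: ballB_eq)
  then have "c * oneS P x0 = 0" by (rule extp_perturbation_eq_0[OF assms(1)])
  then show False using assms(2,3) by (simp add: oneS_def)
qed

lemma extp_FM_supn:
  assumes ex: "f \<in> extp (ballB FM P)" and "P \<noteq> {}"
  shows "supn P f = 1"
proof (rule ccontr)
  have fi: "in_ball FM P f" and B: "f \<in> BLsp P" using extp_mem[OF ex] ballB_eq by (auto simp: ballB_def)
  assume "supn P f \<noteq> 1"
  moreover have "supn P f \<le> 1" using fi by (auto simp: in_ball_def norm_le_def intro: supn_le)
  ultimately have lt: "0 < 1 - supn P f" by simp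
  have "in_ball FM P (\<lambda>x. f x + s * (1 - supn P f) * oneS P x)" if "\<bar>s\<bar> = 1" for s
  proof -
    have "\<bar>f x + s * (1 - supn P f)\<bar> \<le> 1" if "x \<in> P" for x
      using abs_le_supn[OF B that] \<open>\<bar>s\<bar> = 1\<close> lt abs_triangle_ineq[of "f x" "s * (1 - supn P f)"]
      by (simp add: abs_mult)
    then show ?thesis using in_ball_lipschitz[OF fi] in_ball_vanishes[OF fi]
      by (intro in_ball_FM_I) (auto simp: oneS_def)
  qed
  then show False using extp_not_constant_shift[OF ex _ lt] \<open>P \<noteq> {}\<close> by blast
qed

lemma extp_BL_norm:
  assumes ex: "f \<in> extp (ballB BL P)" and "P \<noteq> {}"
  shows "supn P f + lipc P f = 1"
proof (rule ccontr)
  have fi: "in_ball BL P f" and B: "f \<in> BLsp P" using extp_mem[OF ex] ballB_eq by (auto simp: ballB_def)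
  assume "supn P f + lipc P f \<noteq> 1"
  moreover have "bnorm BL P f \<le> 1" using extp_mem[OF ex] by (simp add: ballB_def)
  ultimately have lt: "0 < 1 - (supn P f + lipc P f)" by (simp add: bnorm_def)
  define c where "c = 1 - (supn P f + lipc P f)"
  have "in_ball BL P (\<lambda>x. f x + s * c * oneS P x)" if "\<bar>s\<bar> = 1" for s
  proof -
    have shift: "\<bar>f x + s * c\<bar> \<le> supn P f + c" if "x \<in> P" for x
      using abs_le_supn[OF B that] \<open>\<bar>s\<bar> = 1\<close> lt abs_triangle_ineq[of "f x" "s * c"]
      by (simp add: abs_mult c_def)
    show ?thesis
    proof (rule in_ball_BL_I)
      show "\<bar>f x + s * c * oneS P x\<bar> \<le> 1" if "x \<in> P" for x
        using shift[OF that] lipc_nonneg[OF B] that by (simp add: oneS_def c_def)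
      show "\<bar>f x + s * c * oneS P x\<bar> + \<bar>f a + s * c * oneS P a - (f b + s * c * oneS P b)\<bar> / dist a b \<le> 1"
        if "x \<in> P" "a \<in> P" "b \<in> P" "a \<noteq> b" for x a b
        using shift[OF that(1)] slope_le_lipc[OF B that(2-4)] that by (simp add: oneS_def c_def)
    qed (simp add: oneS_def in_ball_vanishes[OF fi])
  qed
  then show False using extp_not_constant_shift[OF ex _ lt] \<open>P \<noteq> {}\<close> unfolding c_def by blast
qed

text \<open>Otherwise \<open>f\<close> could be perturbed by \<open>\<plusminus>(1 - lipc P f) (1 - \<bar>f\<bar>)\<close>, which is non-zero at \<open>x0\<close>.\<close>

lemma extp_FM_lipc:
  assumes ex: "f \<in> extp (ballB FM P)" and x0: "x0 \<in> P" "\<bar>f x0\<bar> \<noteq> 1"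
  shows "lipc P f = 1"
proof (rule ccontr)
  have fi: "in_ball FM P f" and B: "f \<in> BLsp P" using extp_mem[OF ex] ballB_eq by (auto simp: ballB_def)
  define L where "L = lipc P f"
  assume "lipc P f \<noteq> 1"
  moreover have "lipc P f \<le> 1" using in_ball_lipschitz[OF fi] by (auto intro!: lipc_le simp: divide_le_eq)
  ultimately have L: "0 \<le> L" "L < 1" using lipc_nonneg[OF B] by (auto simp: L_def)
  define u where "u x = (if x \<in> P then (1 - L) * (1 - \<bar>f x\<bar>) else 0)" for x
  have pm: "in_ball FM P (\<lambda>x. f x + s * u x)" if s: "\<bar>s\<bar> = 1" for s
  proof (rule in_ball_FM_I)
    show "\<bar>f x + s * u x\<bar> \<le> 1" if "x \<in> P" for x
    proof -
      have "\<bar>f x\<bar> \<le> 1" by (rule in_ball_abs_le[OF fi])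
      then have "\<bar>s * u x\<bar> \<le> 1 - \<bar>f x\<bar>" using s that L by (simp add: u_def abs_mult mult_left_le_one_le)
      then show ?thesis using abs_triangle_ineq[of "f x" "s * u x"] by linarith
    qed
    show "\<bar>f a + s * u a - (f b + s * u b)\<bar> \<le> dist a b" if ab: "a \<in> P" "b \<in> P" for a b
    proof -
      have "u a - u b = (1 - L) * (\<bar>f b\<bar> - \<bar>f a\<bar>)" using ab by (simp add: u_def algebra_simps)
      then have "\<bar>s * u a - s * u b\<bar> = (1 - L) * \<bar>\<bar>f b\<bar> - \<bar>f a\<bar>\<bar>"
        using s L by (simp add: abs_mult right_diff_distrib[symmetric])
      also have "\<dots> \<le> (1 - L) * \<bar>f a - f b\<bar>"
        using L abs_triangle_ineq3[of "f b" "f a"] by (simp add: abs_minus_commute)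
      finally have "\<bar>f a + s * u a - (f b + s * u b)\<bar> \<le> (2 - L) * \<bar>f a - f b\<bar>"
        using abs_triangle_ineq[of "f a - f b" "s * u a - s * u b"] by (simp add: algebra_simps)
      also have "\<dots> \<le> (2 - L) * (L * dist a b)"
        using abs_diff_le_lipc[OF B ab] L by (intro mult_left_mono) (auto simp: L_def)
      also have "\<dots> = (1 - (1 - L)\<^sup>2) * dist a b" by (simp add: power2_eq_square algebra_simps)
      also have "\<dots> \<le> dist a b" using mult_right_mono[of "1 - (1 - L)\<^sup>2" 1 "dist a b"] by simp
      finally show ?thesis .
    qed
  qed (simp add: u_def in_ball_vanishes[OF fi])
  have "u x0 = 0"
    using extp_perturbation_eq_0[OF ex] pm[of 1] pm[of "-1"] by (simp add: ballB_eq)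
  then show False using x0 L in_ball_abs_le[OF fi, of x0] by (simp add: u_def)
qed

lemma ext_star_iff: "f \<in> ext_star N P \<longleftrightarrow> f \<in> extp (ballB N P) \<and> (\<exists>x\<in>P. \<bar>f x\<bar> \<noteq> 1)"
  by (auto simp: ext_star_def dest: extp_mem)

lemma ext_star_nonempty: "f \<in> ext_star N P \<Longrightarrow> P \<noteq> {}"
  by (auto simp: ext_star_iff)

lemma ext_star_FM_norms:
  assumes "f \<in> ext_star FM P" shows "supn P f = 1" "lipc P f = 1"
proof -
  obtain x0 where ex: "f \<in> extp (ballB FM P)" and x0: "x0 \<in> P" "\<bar>f x0\<bar> \<noteq> 1"
    using assms by (auto simp: ext_star_iff)
  show "supn P f = 1" using extp_FM_supn[OF ex] x0 by blast
  show "lipc P f = 1" using extp_FM_lipc[OF ex x0] .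
qed

lemma ext_star_BL_norm:
  assumes "f \<in> ext_star BL P" shows "supn P f + lipc P f = 1"
  using assms extp_BL_norm ext_star_nonempty[OF assms] by (auto simp: ext_star_iff)

lemma supn_attained:
  assumes "finite A" "A \<noteq> {}" shows "\<exists>x\<in>A. supn A f = \<bar>f x\<bar>"
proof -
  have "supn A f = Max ((\<lambda>x. \<bar>f x\<bar>) ` A)" using assms by (simp add: supn_def cSup_eq_Max)
  moreover have "Max ((\<lambda>x. \<bar>f x\<bar>) ` A) \<in> (\<lambda>x. \<bar>f x\<bar>) ` A" using assms by (intro Max_in) auto
  ultimately show ?thesis by auto
qed

lemma lipc_attained:
  assumes "finite A" "a \<in> A" "b \<in> A" "a \<noteq> b"
  shows "\<exists>p\<in>A. \<exists>q\<in>A. p \<noteq> q \<and> lipc A f = \<bar>f p - f q\<bar> / dist p q"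
proof -
  let ?Q = "{(x,y). x \<in> A \<and> y \<in> A \<and> x \<noteq> y}"
  let ?s = "\<lambda>p. \<bar>f (fst p) - f (snd p)\<bar> / dist (fst p) (snd p)"
  have Q: "finite ?Q" "?Q \<noteq> {}"
    using assms by (auto intro: finite_subset[of _ "A \<times> A"])
  then have "lipc A f = Max (?s ` ?Q)" using assms by (auto simp: lipc_def cSup_eq_Max)
  moreover have "Max (?s ` ?Q) \<in> ?s ` ?Q" using Q by (intro Max_in) auto
  ultimately show ?thesis by force
qed

lemma ext_star_BL_two_points:
  assumes "f \<in> ext_star BL P" shows "\<exists>a\<in>P. \<exists>b\<in>P. a \<noteq> b"
proof (rule ccontr)
  assume single: "\<not> ?thesis"
  then have "lipc P f = 0" by (simp add: lipc_def)
  then have "supn P f = 1" using ext_star_BL_norm[OF assms] by simp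
  obtain p where "p \<in> P" using ext_star_nonempty[OF assms] by auto
  with single have "P = {p}" by auto
  then show False using assms \<open>supn P f = 1\<close> by (simp add: ext_star_iff supn_def)
qed

section \<open>The extension operator and the set \<open>E\<^sub>S\<close>\<close>

lemma Max_sub_dist_le:
  fixes f :: "'a::metric_space \<Rightarrow> real"
  assumes "finite P" "P \<noteq> {}" "0 \<le> L"
  shows "Max ((\<lambda>p. f p - L * dist p x) ` P) \<le> Max ((\<lambda>p. f p - L * dist p y) ` P) + L * dist x y"
proof -
  have "Max ((\<lambda>p. f p - L * dist p x) ` P) \<in> (\<lambda>p. f p - L * dist p x) ` P"
    using assms by (intro Max_in) auto
  then obtain p where p: "p \<in> P" "Max ((\<lambda>p. f p - L * dist p x) ` P) = f p - L * dist p x"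
    by auto
  have "L * dist p y \<le> L * (dist p x + dist x y)"
    using dist_triangle[of p y x] assms(3) by (rule mult_left_mono)
  moreover have "f p - L * dist p y \<le> Max ((\<lambda>p. f p - L * dist p y) ` P)"
    using p assms by (intro Max_ge) auto
  ultimately show ?thesis using p by (simp add: distrib_left)
qed

context
  fixes S P :: "'a::metric_space set" and f :: "'a \<Rightarrow> real"
  assumes P: "finite P" "P \<noteq> {}" "P \<subseteq> S" and f: "f \<in> BLsp P"
begin

private abbreviation "ext_op_peak x \<equiv> Max ((\<lambda>p. f p - lipc P f * dist p x) ` P)"

private lemma ext_op_eq_max: "x \<in> S \<Longrightarrow> ext_op S P f x = max (ext_op_peak x) (- supn P f)"
  by (simp add: ext_op_def)

lemma ext_op_abs_le: "\<bar>ext_op S P f x\<bar> \<le> supn P f"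
proof (cases "x \<in> S")
  case True
  have "f p - lipc P f * dist p x \<le> supn P f" if "p \<in> P" for p
    using abs_le_supn[OF f that] lipc_nonneg[OF f] by (smt (verit) zero_le_dist zero_le_mult_iff)
  then have "ext_op_peak x \<le> supn P f" using P by (subst Max_le_iff) auto
  then show ?thesis using ext_op_eq_max[OF True] supn_nonneg[OF f] by auto
qed (simp add: ext_op_def supn_nonneg[OF f])

lemma ext_op_lipschitz:
  assumes "x \<in> S" "y \<in> S"
  shows "\<bar>ext_op S P f x - ext_op S P f y\<bar> \<le> lipc P f * dist x y"
proof -
  have "ext_op_peak x \<le> ext_op_peak y + lipc P f * dist x y" by (rule Max_sub_dist_le[OF P(1,2) lipc_nonneg[OF f]])
  moreover have "ext_op_peak y \<le> ext_op_peak x + lipc P f * dist x y"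
    using Max_sub_dist_le[OF P(1,2) lipc_nonneg[OF f], of f y x] dist_commute[of y x] by simp
  moreover have "0 \<le> lipc P f * dist x y" using lipc_nonneg[OF f] by simp
  ultimately show ?thesis using ext_op_eq_max[OF assms(1)] ext_op_eq_max[OF assms(2)]
    by (auto simp: max_def abs_le_iff)
qed

lemma ext_op_eq:
  assumes x: "x \<in> P" shows "ext_op S P f x = f x"
proof -
  have "f p - lipc P f * dist p x \<le> f x" if "p \<in> P" for p
    using abs_diff_le_lipc[OF f that x] by (simp add: abs_le_iff)
  then have "ext_op_peak x \<le> f x" using P by (subst Max_le_iff) auto
  moreover have "f x - lipc P f * dist x x \<le> ext_op_peak x" by (rule Max_ge[OF _ imageI[OF x]]) (use P in auto)
  moreover have "- supn P f \<le> f x" using abs_le_supn[OF f x] by simp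
  ultimately show ?thesis using ext_op_eq_max[of x] x P(3) by auto
qed

end

lemma ext_star_BLsp: "f \<in> ext_star N P \<Longrightarrow> f \<in> BLsp P"
  by (auto simp: ext_star_iff ballB_def dest: extp_mem)

lemma ext_op_in_ball:
  assumes f: "f \<in> ext_star N P" and P: "finite P" "P \<subseteq> S"
  shows "in_ball N S (ext_op S P f)"
proof -
  note op = ext_op_abs_le[OF P(1) ext_star_nonempty[OF f] P(2) ext_star_BLsp[OF f]]
    ext_op_lipschitz[OF P(1) ext_star_nonempty[OF f] P(2) ext_star_BLsp[OF f]]
  have vanish: "x \<notin> S \<Longrightarrow> ext_op S P f x = 0" for x by (simp add: ext_op_def)
  show ?thesis
  proof (cases N)
    case FM
    show ?thesis unfolding FM using ext_star_FM_norms[OF f[unfolded FM]] op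
      by (intro in_ball_FM_I vanish) auto
  next
    case BL
    have n: "supn P f + lipc P f = 1" using ext_star_BL_norm f BL by blast
    show ?thesis unfolding BL
    proof (rule in_ball_BL_I[OF vanish])
      show "\<bar>ext_op S P f x\<bar> \<le> 1" for x
        using op(1)[of x] n lipc_nonneg[OF ext_star_BLsp[OF f]] by linarith
      show "\<bar>ext_op S P f x\<bar> + \<bar>ext_op S P f a - ext_op S P f b\<bar> / dist a b \<le> 1"
        if "a \<in> S" "b \<in> S" "a \<noteq> b" for x a b
      proof -
        have "\<bar>ext_op S P f a - ext_op S P f b\<bar> / dist a b \<le> lipc P f"
          using op(2)[OF that(1,2)] that(3) by (simp add: pos_divide_le_eq)
        then show ?thesis using op(1)[of x] n by linarith
      qed
    qed
  qed
qed

text \<open>In the \<open>BL\<close> case both the sup norm and the Lipschitz constant of \<open>f\<close> are attained on \<open>P\<close>, and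
  \<open>supn P f + lipc P f = 1\<close> then bounds each of them for \<open>g\<close>.\<close>

lemma ext_star_extension_bounds:
  assumes f: "f \<in> ext_star N P" and P: "finite P" "P \<subseteq> S"
    and g: "in_ball N S g" "\<forall>p\<in>P. g p = f p" and x: "x \<in> S"
  shows "\<bar>g x\<bar> \<le> supn P f" and "p \<in> P \<Longrightarrow> \<bar>g p - g x\<bar> \<le> lipc P f * dist p x"
proof -
  have "\<bar>g x\<bar> \<le> supn P f \<and> (p \<in> P \<longrightarrow> \<bar>g p - g x\<bar> \<le> lipc P f * dist p x)"
  proof (cases N)
    case FM
    then show ?thesis using ext_star_FM_norms[of f P] f in_ball_abs_le[OF g(1)]
      in_ball_lipschitz[OF g(1), of p x] x P(2) by auto
  next
    case BL
    have n: "supn P f + lipc P f = 1" using ext_star_BL_norm f BL by blast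
    obtain a b where ab: "a \<in> P" "b \<in> P" "a \<noteq> b" using ext_star_BL_two_points f BL by blast
    obtain p0 q0 where pq: "p0 \<in> P" "q0 \<in> P" "p0 \<noteq> q0" "lipc P f = \<bar>f p0 - f q0\<bar> / dist p0 q0"
      using lipc_attained[OF P(1) ab] by blast
    obtain p1 where p1: "p1 \<in> P" "supn P f = \<bar>f p1\<bar>"
      using supn_attained[OF P(1) ext_star_nonempty[OF f]] by blast
    have gBL: "in_ball BL S g" using g(1) BL by simp
    have "p0 \<in> S" "q0 \<in> S" using pq P(2) by auto
    then have "\<bar>g x\<bar> \<le> supn P f"
      using in_ball_BL[OF gBL x _ _ pq(3)] pq g(2) n by auto
    moreover have "\<bar>g p - g x\<bar> \<le> lipc P f * dist p x" if p: "p \<in> P"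
    proof (cases "p = x")
      case False
      have "p1 \<in> S" "p \<in> S" using p p1 P(2) by auto
      then have "\<bar>g p1\<bar> + \<bar>g p - g x\<bar> / dist p x \<le> 1" using in_ball_BL[OF gBL _ _ x False] by blast
      moreover have "\<bar>g p1\<bar> = supn P f" using p1 g(2) by simp
      ultimately have "\<bar>g p - g x\<bar> / dist p x \<le> lipc P f" using n by linarith
      then show ?thesis using False by (simp add: divide_le_eq)
    qed simp
    ultimately show ?thesis by blast
  qed
  then show "\<bar>g x\<bar> \<le> supn P f" and "p \<in> P \<Longrightarrow> \<bar>g p - g x\<bar> \<le> lipc P f * dist p x" by auto
qed

lemma ext_op_le_extension:
  assumes f: "f \<in> ext_star N P" and P: "finite P" "P \<subseteq> S"
    and g: "in_ball N S g" "\<forall>p\<in>P. g p = f p" and x: "x \<in> S"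
  shows "ext_op S P f x \<le> g x"
proof -
  note bounds = ext_star_extension_bounds[OF assms]
  have "f p - lipc P f * dist p x \<le> g x" if "p \<in> P" for p
    using bounds(2)[OF that] g(2) that by (auto simp: abs_le_iff)
  then have "Max ((\<lambda>p. f p - lipc P f * dist p x) ` P) \<le> g x"
    using P ext_star_nonempty[OF f] by (subst Max_le_iff) auto
  then show ?thesis using bounds(1) x by (simp add: ext_op_def)
qed

text \<open>A convex combination of elements of \<open>B\<^sub>S\<close> equal to \<open>ext_op S P f\<close> restricts on \<open>P\<close> to a convex
  combination equal to the extreme point \<open>f\<close>, so both summands extend \<open>f\<close> and hence dominate the least
  extension \<open>ext_op S P f\<close>.\<close>

lemma ext_op_extp:
  assumes f: "f \<in> ext_star N P" and P: "finite P" "P \<subseteq> S"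
  shows "ext_op S P f \<in> extp (ballB N S)"
proof (rule extpI)
  let ?F = "ext_op S P f"
  show "?F \<in> ballB N S" using ext_op_in_ball[OF assms] by (simp add: ballB_eq)
  fix g h t assume "g \<in> ballB N S" "h \<in> ballB N S" and t: "0 < t" "t < 1"
    and Fx: "\<And>x. ?F x = t * g x + (1 - t) * h x"
  then have gi: "in_ball N S g" and hi: "in_ball N S h" by (auto simp: ballB_eq)
  let ?r = "\<lambda>k x. if x \<in> P then k x else 0"
  have fi: "in_ball N P f" using f by (auto simp: ext_star_iff dest: extp_ballB_in_ball)
  have rP: "?r g \<in> ballB N P" "?r h \<in> ballB N P"
    using in_ball_restrict[OF gi P(2)] in_ball_restrict[OF hi P(2)] by (auto simp: ballB_eq)
  have "f x = t * ?r g x + (1 - t) * ?r h x" for x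
    using Fx[of x] ext_op_eq[OF P(1) ext_star_nonempty[OF f] P(2) ext_star_BLsp[OF f], of x]
      in_ball_vanishes[OF fi, of x] by auto
  then have "?r g = ?r h" using extpD[OF _ rP t] f by (auto simp: ext_star_iff)
  then have "g p = h p" if "p \<in> P" for p using fun_cong[of "?r g" "?r h" p] that by simp
  then have "g p = f p" "h p = f p" if "p \<in> P" for p
    using Fx[of p] ext_op_eq[OF P(1) ext_star_nonempty[OF f] P(2) ext_star_BLsp[OF f] that] that
    by (simp_all add: left_diff_distrib)
  then have lower: "?F x \<le> g x" "?F x \<le> h x" if "x \<in> S" for x
    using ext_op_le_extension[OF f P gi _ that] ext_op_le_extension[OF f P hi _ that] by auto
  show "g = h"
  proof
    fix x show "g x = h x"
      using convex_comb_eq_if_le[OF t Fx lower] in_ball_vanishes[OF gi] in_ball_vanishes[OF hi]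
      by (cases "x \<in> S") auto
  qed
qed

context
  fixes S P :: "'a::metric_space set"
  assumes P: "finite P" "P \<noteq> {}" "P \<subseteq> S"
begin

private abbreviation "hP_peak x \<equiv> Max ((\<lambda>p. 1 - 1 * dist p x) ` P)"

private lemma hP_eq_max: "x \<in> S \<Longrightarrow> hP S P x = max (-1) (hP_peak x)"
  by (simp add: hP_def dist_commute)

private lemma hP_peak_le_1: "hP_peak x \<le> 1"
  using P by (subst Max_le_iff) auto

lemma hP_in_ball: "in_ball FM S (hP S P)"
proof (rule in_ball_FM_I)
  show "hP S P x = 0" if "x \<notin> S" for x using that by (simp add: hP_def)
  show "\<bar>hP S P x\<bar> \<le> 1" if "x \<in> S" for x using hP_eq_max[OF that] hP_peak_le_1[of x] by (simp add: abs_le_iff)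
  show "\<bar>hP S P x - hP S P y\<bar> \<le> dist x y" if "x \<in> S" "y \<in> S" for x y
  proof -
    have "hP_peak x \<le> hP_peak y + 1 * dist x y" by (rule Max_sub_dist_le[OF P(1,2)]) simp
    moreover have "hP_peak y \<le> hP_peak x + 1 * dist x y"
      using Max_sub_dist_le[OF P(1,2), of 1 "\<lambda>_. 1" y x] dist_commute[of y x] by simp
    ultimately show ?thesis using hP_eq_max[OF that(1)] hP_eq_max[OF that(2)] by (auto simp: max_def abs_le_iff)
  qed
qed

lemma hP_eq_1:
  assumes p: "p \<in> P" shows "hP S P p = 1"
proof -
  have "1 - 1 * dist p p \<le> hP_peak p" by (rule Max_ge[OF _ imageI[OF p]]) (use P in auto)
  then show ?thesis using hP_eq_max[of p] hP_peak_le_1[of p] p P(3) by auto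
qed

lemma hP_le_in_ball:
  assumes "in_ball FM S k" "\<forall>p\<in>P. k p = 1" "x \<in> S"
  shows "hP S P x \<le> k x"
proof -
  have "1 - dist p x \<le> k x" if "p \<in> P" for p
    using in_ball_lipschitz[OF assms(1), of p x] that P(3) assms(2,3) by (auto simp: abs_le_iff)
  then show ?thesis using in_ball_abs_le[OF assms(1), of x] assms(3) P
    by (auto simp: hP_eq_max Max_le_iff abs_le_iff)
qed

lemma hP_extp: "hP S P \<in> extp (ballB FM S)"
proof (rule extpI)
  show "hP S P \<in> ballB FM S" using hP_in_ball by (simp add: ballB_eq)
  fix g h t assume "g \<in> ballB FM S" "h \<in> ballB FM S" and t: "0 < t" "t < 1"
    and Fx: "\<And>x. hP S P x = t * g x + (1 - t) * h x"
  then have gi: "in_ball FM S g" and hi: "in_ball FM S h" by (auto simp: ballB_eq)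
  have "g p = 1 \<and> h p = 1" if "p \<in> P" for p
    using convex_comb_eq_if_ge[OF t Fx[of p]] hP_eq_1[OF that] in_ball_abs_le[OF gi, of p]
      in_ball_abs_le[OF hi, of p] by (auto simp: abs_le_iff)
  then have lower: "hP S P x \<le> g x" "hP S P x \<le> h x" if "x \<in> S" for x
    using hP_le_in_ball[OF gi _ that] hP_le_in_ball[OF hi _ that] by auto
  show "g = h"
  proof
    fix x show "g x = h x"
      using convex_comb_eq_if_le[OF t Fx lower] in_ball_vanishes[OF gi] in_ball_vanishes[OF hi]
      by (cases "x \<in> S") auto
  qed
qed

end

lemma unimodular_extp:
  assumes "in_ball N S f" "\<forall>x\<in>S. \<bar>f x\<bar> = 1"
  shows "f \<in> extp (ballB N S)"
proof (rule extpI)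
  show "f \<in> ballB N S" using assms by (simp add: ballB_eq)
  fix g h t assume "g \<in> ballB N S" "h \<in> ballB N S" and t: "0 < t" "t < 1"
    and Fx: "\<And>x. f x = t * g x + (1 - t) * h x"
  then have gi: "in_ball N S g" and hi: "in_ball N S h" by (auto simp: ballB_eq)
  have "g x = h x" for x
  proof (cases "x \<in> S")
    case True
    have b: "\<bar>g x\<bar> \<le> 1" "\<bar>h x\<bar> \<le> 1" using in_ball_abs_le gi hi by blast+
    have "\<bar>f x\<bar> = 1" using assms(2) True by blast
    then consider "f x = 1" | "f x = -1" by linarith
    then show ?thesis
    proof cases
      case 1
      then show ?thesis using convex_comb_eq_if_ge[OF t Fx[of x]] b by (simp add: abs_le_iff)
    next
      case 2
      then show ?thesis using convex_comb_eq_if_le[OF t Fx[of x]] b by (simp add: abs_le_iff)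
    qed
  qed (simp add: in_ball_vanishes[OF gi] in_ball_vanishes[OF hi])
  then show "g = h" ..
qed

lemma E_set_subset_extp: "E_set N S \<subseteq> extp (ballB N S)"
proof -
  have "in_ball N S (oneS S)" "in_ball N S (\<lambda>x. - oneS S x)"
    using in_ball_unimodular[of 1 N S] in_ball_unimodular[of "-1" N S] by simp_all
  then have const: "oneS S \<in> extp (ballB N S)" "(\<lambda>x. - oneS S x) \<in> extp (ballB N S)"
    by (auto intro!: unimodular_extp simp: oneS_def)
  have ext: "(\<Union>P\<in>{P. finite P \<and> P \<subseteq> S}. ext_op S P ` ext_star N P) \<subseteq> extp (ballB N S)"
    using ext_op_extp by blast
  have "{f \<in> ballB N S. \<forall>x\<in>S. \<bar>f x\<bar> = 1} \<subseteq> extp (ballB N S)"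
    using unimodular_extp by (auto simp: ballB_eq)
  moreover have "{hP S P | P. finite P \<and> P \<noteq> {} \<and> P \<subseteq> S} \<subseteq> extp (ballB FM S)"
    using hP_extp by blast
  ultimately show ?thesis using const ext by (cases N) (simp_all add: E_set_def)
qed

lemma E_set_in_ball: "g \<in> E_set N S \<Longrightarrow> in_ball N S g"
  using E_set_subset_extp extp_ballB_in_ball by blast

section \<open>Finite unit balls are polytopes\<close>

definition polyhedron :: "'a set \<Rightarrow> (('a \<Rightarrow> real) \<Rightarrow> real) set \<Rightarrow> ('a \<Rightarrow> real) set" where
  "polyhedron P Cs = {f. (\<forall>x. x \<notin> P \<longrightarrow> f x = 0) \<and> (\<forall>c\<in>Cs. c f \<le> 1)}"

definition linear_fun :: "(('a \<Rightarrow> real) \<Rightarrow> real) \<Rightarrow> bool" where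
  "linear_fun c \<longleftrightarrow> (\<forall>f g a b. c (\<lambda>x. a * f x + b * g x) = a * c f + b * c g)"

definition convex_combs :: "('a \<Rightarrow> real) set \<Rightarrow> ('a \<Rightarrow> real) set" where
  "convex_combs X = {f. \<exists>I w. finite I \<and> I \<subseteq> X \<and> (\<forall>e\<in>I. 0 \<le> w e) \<and> sum w I = 1 \<and>
              (\<forall>x. f x = (\<Sum>e\<in>I. w e * e x))}"

lemma linear_funD: "linear_fun c \<Longrightarrow> c (\<lambda>x. a * f x + b * g x) = a * c f + b * c g"
  by (simp add: linear_fun_def)

lemma linear_fun_add_scaled: "linear_fun c \<Longrightarrow> c (\<lambda>x. f x + s * u x) = c f + s * c u"
  using linear_funD[of c 1 f s u] by simp

lemma linear_fun_uminus: "linear_fun c \<Longrightarrow> c (\<lambda>x. - u x) = - c u"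
  using linear_funD[of c "-1" u 0 u] by simp

lemma linear_fun_diff: "linear_fun c \<Longrightarrow> c (\<lambda>x. g x - h x) = c g - c h"
  using linear_funD[of c 1 g "-1" h] by simp

lemma convex_combs_single: "f \<in> X \<Longrightarrow> f \<in> convex_combs X"
  unfolding convex_combs_def by (intro CollectI exI[of _ "{f}"] exI[of _ "\<lambda>_. 1"]) auto

lemma convex_combs_comb:
  assumes "f1 \<in> convex_combs X" "f2 \<in> convex_combs X" "0 \<le> a" "a \<le> 1"
  shows "(\<lambda>x. a * f1 x + (1 - a) * f2 x) \<in> convex_combs X"
proof -
  obtain I1 w1 where 1: "finite I1" "I1 \<subseteq> X" "\<forall>e\<in>I1. 0 \<le> w1 e" "sum w1 I1 = 1" "\<forall>x. f1 x = (\<Sum>e\<in>I1. w1 e * e x)"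
    using assms(1) unfolding convex_combs_def by blast
  obtain I2 w2 where 2: "finite I2" "I2 \<subseteq> X" "\<forall>e\<in>I2. 0 \<le> w2 e" "sum w2 I2 = 1" "\<forall>x. f2 x = (\<Sum>e\<in>I2. w2 e * e x)"
    using assms(2) unfolding convex_combs_def by blast
  define v1 where "v1 e = (if e \<in> I1 then w1 e else 0)" for e
  define v2 where "v2 e = (if e \<in> I2 then w2 e else 0)" for e
  define w where "w e = a * v1 e + (1 - a) * v2 e" for e
  have "(\<Sum>e\<in>I1 \<union> I2. v1 e * k e) = (\<Sum>e\<in>I1. w1 e * k e)"
    "(\<Sum>e\<in>I1 \<union> I2. v2 e * k e) = (\<Sum>e\<in>I2. w2 e * k e)" for k :: "('a \<Rightarrow> real) \<Rightarrow> real"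
    using 1(1) 2(1) by (auto simp: v1_def v2_def intro!: sum.mono_neutral_cong_right)
  then have sums: "(\<Sum>e\<in>I1 \<union> I2. w e * k e) = a * (\<Sum>e\<in>I1. w1 e * k e) + (1 - a) * (\<Sum>e\<in>I2. w2 e * k e)"
    for k :: "('a \<Rightarrow> real) \<Rightarrow> real"
    by (simp add: w_def distrib_right sum.distrib sum_distrib_left mult.assoc flip: sum_distrib_left)
  show ?thesis unfolding convex_combs_def
  proof (intro CollectI exI conjI)
    show "finite (I1 \<union> I2)" "I1 \<union> I2 \<subseteq> X" using 1 2 by auto
    show "\<forall>e\<in>I1 \<union> I2. 0 \<le> w e" using 1 2 assms by (auto simp: w_def v1_def v2_def)
    show "sum w (I1 \<union> I2) = 1" using sums[of "\<lambda>_. 1"] 1 2 by simp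
    show "\<forall>x. a * f1 x + (1 - a) * f2 x = (\<Sum>e\<in>I1 \<union> I2. w e * e x)" using sums 1 2 by simp
  qed
qed

context
  fixes P :: "'a set" and Cs :: "(('a \<Rightarrow> real) \<Rightarrow> real) set"
  assumes fin: "finite Cs" and lin: "\<forall>c\<in>Cs. linear_fun c"
    and bnd: "\<forall>g\<in>polyhedron P Cs. \<forall>x\<in>P. \<bar>g x\<bar> \<le> 1"
begin

lemma polyhedron_add_scaled:
  assumes f: "f \<in> polyhedron P Cs" and u: "\<forall>x. x \<notin> P \<longrightarrow> u x = 0" and "0 \<le> s"
    and le: "\<forall>c\<in>Cs. 0 < c u \<longrightarrow> s * c u \<le> 1 - c f"
  shows "(\<lambda>x. f x + s * u x) \<in> polyhedron P Cs"
proof -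
  have "c (\<lambda>x. f x + s * u x) \<le> 1" if c: "c \<in> Cs" for c
  proof (cases "0 < c u")
    case False
    then have "s * c u \<le> 0" using \<open>0 \<le> s\<close> by (simp add: mult_nonneg_nonpos)
    then show ?thesis using linear_fun_add_scaled[of c f s u] lin c f by (fastforce simp: polyhedron_def)
  qed (use le c lin linear_fun_add_scaled in fastforce)
  then show ?thesis using f u by (auto simp: polyhedron_def)
qed

lemma polyhedron_direction_increases_constraint:
  assumes f: "f \<in> polyhedron P Cs" and u: "\<forall>x. x \<notin> P \<longrightarrow> u x = 0" and x0: "u x0 \<noteq> 0"
  shows "\<exists>c\<in>Cs. 0 < c u"
proof (rule ccontr)
  assume none: "\<not> ?thesis"
  define s where "s = 3 / \<bar>u x0\<bar>"
  have "0 < s" using x0 by (simp add: s_def)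
  then have "(\<lambda>x. f x + s * u x) \<in> polyhedron P Cs"
    using none by (intro polyhedron_add_scaled[OF f u]) auto
  moreover have x0P: "x0 \<in> P" using u x0 by blast
  ultimately have "\<bar>f x0 + s * u x0\<bar> \<le> 1" using bnd by auto
  moreover have "\<bar>f x0\<bar> \<le> 1" using bnd f x0P by auto
  moreover have "\<bar>s * u x0\<bar> = 3" using x0 by (simp add: s_def abs_mult)
  ultimately show False by linarith
qed

lemma polyhedron_move_to_face:
  assumes f: "f \<in> polyhedron P Cs" and u: "\<forall>x. x \<notin> P \<longrightarrow> u x = 0" "u x0 \<noteq> 0"
    and act: "\<forall>c\<in>Cs. c f = 1 \<longrightarrow> c u = 0"
  shows "\<exists>s>0. (\<lambda>x. f x + s * u x) \<in> polyhedron P Cs \<and>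
     {c\<in>Cs. c f = 1} \<subset> {c\<in>Cs. c (\<lambda>x. f x + s * u x) = 1}"
proof -
  define W where "W = {c\<in>Cs. 0 < c u}"
  have W: "finite W" "W \<noteq> {}"
    using fin polyhedron_direction_increases_constraint[OF f u] by (auto simp: W_def)
  have pos: "0 < (1 - c f) / c u" if "c \<in> W" for c
    using act that f by (force simp: W_def polyhedron_def order_le_less)
  define s where "s = Min ((\<lambda>c. (1 - c f) / c u) ` W)"
  have "s \<in> (\<lambda>c. (1 - c f) / c u) ` W" unfolding s_def using W by (intro Min_in) auto
  then obtain cs where cs: "cs \<in> W" "s = (1 - cs f) / cs u" by auto
  have s0: "0 < s" using pos cs by simp
  have "s * c u \<le> 1 - c f" if "c \<in> Cs" "0 < c u" for c
    using Min_le[of "(\<lambda>c. (1 - c f) / c u) ` W" "(1 - c f) / c u"] W that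
    by (auto simp: s_def W_def le_divide_eq)
  then have K: "(\<lambda>x. f x + s * u x) \<in> polyhedron P Cs"
    using s0 by (intro polyhedron_add_scaled[OF f u(1)]) auto
  have "{c\<in>Cs. c f = 1} \<subseteq> {c\<in>Cs. c (\<lambda>x. f x + s * u x) = 1}"
    using act lin linear_fun_add_scaled by fastforce
  moreover have "cs \<in> {c\<in>Cs. c (\<lambda>x. f x + s * u x) = 1} - {c\<in>Cs. c f = 1}"
    using cs pos[OF cs(1)] lin linear_fun_add_scaled[of cs f s u] by (auto simp: W_def)
  ultimately show ?thesis using s0 K by blast
qed

lemma polyhedron_non_extreme_direction:
  assumes f: "f \<in> polyhedron P Cs" "f \<notin> extp (polyhedron P Cs)"
  obtains u x0 where "u x0 \<noteq> 0" "\<forall>x. x \<notin> P \<longrightarrow> u x = 0" "\<forall>c\<in>Cs. c f = 1 \<longrightarrow> c u = 0"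
proof -
  obtain g h t where gh: "g \<in> polyhedron P Cs" "h \<in> polyhedron P Cs" "0 < t" "t < 1"
    "f = (\<lambda>x. t * g x + (1 - t) * h x)" "g \<noteq> h"
    using f unfolding extp_def by blast
  define u where "u x = g x - h x" for x
  obtain x0 where "u x0 \<noteq> 0" using gh(6) by (auto simp: u_def fun_eq_iff)
  moreover have "\<forall>x. x \<notin> P \<longrightarrow> u x = 0" using gh(1,2) by (auto simp: polyhedron_def u_def)
  moreover have "c u = 0" if c: "c \<in> Cs" "c f = 1" for c
  proof -
    have "c f = t * c g + (1 - t) * c h" using gh(5) lin c linear_funD by blast
    moreover have "c g \<le> 1" "c h \<le> 1" using gh(1,2) c by (auto simp: polyhedron_def)
    ultimately have "c g = c h" using convex_comb_eq_if_ge[of t 1 "c g" "c h"] gh(3,4) c by auto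
    then show "c u = 0" using linear_fun_diff[of c g h] lin c by (simp add: u_def[abs_def])
  qed
  ultimately show ?thesis using that by blast
qed

text \<open>Minkowski's theorem for the polytope, by induction on the number of inactive constraints.\<close>

lemma polyhedron_subset_convex_combs_extp: "polyhedron P Cs \<subseteq> convex_combs (extp (polyhedron P Cs))"
proof -
  let ?K = "polyhedron P Cs" and ?act = "\<lambda>f. {c\<in>Cs. c f = 1}"
  have "f \<in> convex_combs (extp ?K)" if "f \<in> ?K" "card (Cs - ?act f) = n" for n f
    using that
  proof (induction n arbitrary: f rule: less_induct)
    case (less n)
    note f = less.prems(1)
    show ?case
    proof (cases "f \<in> extp ?K")
      case False
      then obtain u x0 where u: "u x0 \<noteq> 0" "\<forall>x. x \<notin> P \<longrightarrow> u x = 0" "\<forall>c\<in>Cs. c f = 1 \<longrightarrow> c u = 0"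
        using polyhedron_non_extreme_direction[OF f False] by blast
      have u': "- u x0 \<noteq> 0" "\<forall>x. x \<notin> P \<longrightarrow> - u x = 0" "\<forall>c\<in>Cs. c f = 1 \<longrightarrow> c (\<lambda>x. - u x) = 0"
        using u lin by (auto simp: linear_fun_uminus)
      have step: "(\<lambda>x. f x + s * v x) \<in> convex_combs (extp ?K)"
        if "s > 0" "(\<lambda>x. f x + s * v x) \<in> ?K" "?act f \<subset> ?act (\<lambda>x. f x + s * v x)" for s v
      proof (rule less.IH[OF _ that(2) refl])
        have "Cs - ?act (\<lambda>x. f x + s * v x) \<subset> Cs - ?act f" using that(3) by auto
        then show "card (Cs - ?act (\<lambda>x. f x + s * v x)) < n"
          using less.prems(2) fin by (auto intro: psubset_card_mono)
      qed
      obtain s1 where s1: "s1 > 0" "(\<lambda>x. f x + s1 * u x) \<in> convex_combs (extp ?K)"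
        using polyhedron_move_to_face[OF f u(2,1,3)] step by blast
      obtain s2 where s2: "s2 > 0" "(\<lambda>x. f x + s2 * - u x) \<in> convex_combs (extp ?K)"
        using polyhedron_move_to_face[OF f u'(2,1,3)] step by fastforce
      define a where "a = s2 / (s1 + s2)"
      have a: "0 \<le> a" "a \<le> 1" "a * s1 = (1 - a) * s2" using s1 s2 by (auto simp: a_def field_simps)
      have "a * (f x + s1 * u x) + (1 - a) * (f x + s2 * - u x) = f x + (a * s1 - (1 - a) * s2) * u x" for x
        by (simp add: algebra_simps)
      then have "(\<lambda>x. a * (f x + s1 * u x) + (1 - a) * (f x + s2 * - u x)) = f" using a(3) by simp
      then show ?thesis using convex_combs_comb[OF s1(2) s2(2) a(1,2)] by simp
    qed (rule convex_combs_single)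
  qed
  then show ?thesis by blast
qed

end

definition ball_constraints :: "bl_norm \<Rightarrow> 'a::metric_space set \<Rightarrow> (('a \<Rightarrow> real) \<Rightarrow> real) set" where
  "ball_constraints N P = (\<Union>x\<in>P. {\<lambda>f. f x, \<lambda>f. - f x}) \<union>
     (case N of
       FM \<Rightarrow> \<Union>a\<in>P. \<Union>b\<in>P - {a}. {\<lambda>f. (f a - f b) / dist a b}
     | BL \<Rightarrow> \<Union>x\<in>P. \<Union>a\<in>P. \<Union>b\<in>P - {a}. \<Union>s\<in>{-1, 1}. \<Union>t\<in>{-1, 1}.
               {\<lambda>f. s * f x + t * ((f a - f b) / dist a b)})"

lemma finite_ball_constraints: "finite P \<Longrightarrow> finite (ball_constraints N P)"
  by (cases N) (simp_all add: ball_constraints_def)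

lemma linear_ball_constraints: "\<forall>c\<in>ball_constraints N P. linear_fun c"
  by (cases N) (auto simp: ball_constraints_def linear_fun_def algebra_simps
      diff_divide_distrib add_divide_distrib)

lemma ball_constraints_le_iff: "(\<forall>c\<in>ball_constraints N P. c f \<le> 1) \<longleftrightarrow> norm_le N P 1 f"
proof -
  have constraints: "(\<forall>c\<in>ball_constraints N P. c f \<le> 1) \<longleftrightarrow> (\<forall>x\<in>P. \<bar>f x\<bar> \<le> 1) \<and>
    (case N of FM \<Rightarrow> \<forall>a\<in>P. \<forall>b\<in>P - {a}. (f a - f b) / dist a b \<le> 1
     | BL \<Rightarrow> \<forall>x\<in>P. \<forall>a\<in>P. \<forall>b\<in>P - {a}.
          \<forall>s\<in>{-1,1}. \<forall>t\<in>{-1,1}. s * f x + t * ((f a - f b) / dist a b) \<le> 1)"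
    by (cases N) (simp_all add: ball_constraints_def ball_Un ball_UN abs_le_iff conj_ac)
  show ?thesis
  proof (cases N)
    case FM
    have "(\<forall>a\<in>P. \<forall>b\<in>P - {a}. (f a - f b) / dist a b \<le> 1) \<longleftrightarrow>
        (\<forall>a\<in>P. \<forall>b\<in>P. \<bar>f a - f b\<bar> \<le> 1 * dist a b)"
    proof
      assume H: "\<forall>a\<in>P. \<forall>b\<in>P - {a}. (f a - f b) / dist a b \<le> 1"
      show "\<forall>a\<in>P. \<forall>b\<in>P. \<bar>f a - f b\<bar> \<le> 1 * dist a b"
      proof (intro ballI)
        fix a b assume "a \<in> P" "b \<in> P"
        then show "\<bar>f a - f b\<bar> \<le> 1 * dist a b" using H[rule_format, of a b] H[rule_format, of b a]
          by (cases "a = b") (auto simp: divide_le_eq abs_le_iff dist_commute)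
      qed
    qed (auto simp: divide_le_eq abs_le_iff)
    then show ?thesis using constraints unfolding norm_le_def FM by simp
  next
    case BL
    have sign: "(\<forall>s\<in>{-1,1}. \<forall>t\<in>{-1,1}. s * v + t * r \<le> 1) \<longleftrightarrow> \<bar>v\<bar> + \<bar>r\<bar> \<le> 1" for v r :: real
      by (cases "0 \<le> v"; cases "0 \<le> r") auto
    show ?thesis using constraints unfolding norm_le_def BL by (simp only: sign bl_norm.case) auto
  qed
qed

lemma ballB_eq_polyhedron: "ballB N P = polyhedron P (ball_constraints N P)"
  by (auto simp: ballB_eq in_ball_def polyhedron_def ball_constraints_le_iff)

lemma ballB_subset_convex_combs_extp:
  assumes "finite P" shows "ballB N P \<subseteq> convex_combs (extp (ballB N P))"
  unfolding ballB_eq_polyhedron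
proof (rule polyhedron_subset_convex_combs_extp)
  show "finite (ball_constraints N P)" by (rule finite_ball_constraints[OF assms])
  show "\<forall>c\<in>ball_constraints N P. linear_fun c" by (rule linear_ball_constraints)
  show "\<forall>g\<in>polyhedron P (ball_constraints N P). \<forall>x\<in>P. \<bar>g x\<bar> \<le> 1"
    by (auto simp: ballB_eq_polyhedron[symmetric] ballB_eq intro: in_ball_abs_le)
qed

lemma unimodular_BL_constant:
  assumes e: "in_ball BL P e" "\<forall>x\<in>P. \<bar>e x\<bar> = 1" and "x \<in> P" "p \<in> P"
  shows "e x = e p"
proof (rule ccontr)
  assume "e x \<noteq> e p"
  then have "x \<noteq> p" by auto
  then have "\<bar>e x\<bar> + \<bar>e x - e p\<bar> / dist x p \<le> 1" using in_ball_BL[OF e(1)] assms(3,4) by blast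
  then have "\<bar>e x - e p\<bar> / dist x p \<le> 0" using e(2) assms(3) by simp
  then show False using \<open>x \<noteq> p\<close> \<open>e x \<noteq> e p\<close> by (simp add: divide_le_0_iff)
qed

lemma unimodular_FM_eq_hP:
  assumes e: "in_ball FM P e" "\<forall>x\<in>P. \<bar>e x\<bar> = 1" and P: "finite P" "P \<subseteq> S"
    and Q: "Q = {x\<in>P. e x = 1}" "Q \<noteq> {}" and x: "x \<in> P"
  shows "hP S Q x = e x"
proof (cases "x \<in> Q")
  case True
  moreover have "finite Q" "Q \<subseteq> S" using P Q(1) by auto
  ultimately show ?thesis using hP_eq_1[of Q S x] Q by auto
next
  case False
  moreover have "\<bar>e x\<bar> = 1" using e(2) x by blast
  ultimately have ex: "e x = -1" using x Q(1) by auto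
  have "1 - dist x p \<le> -1" if "p \<in> Q" for p
    using in_ball_lipschitz[OF e(1), of p x] that x ex Q(1) by (auto simp: dist_commute)
  then have "Max ((\<lambda>p. 1 - dist x p) ` Q) \<le> -1"
    using Q P by (subst Max_le_iff) auto
  then show ?thesis using ex x P(2) by (auto simp: hP_def)
qed

lemma constants_in_E_set: "oneS S \<in> E_set N S" "(\<lambda>x. - oneS S x) \<in> E_set N S"
proof -
  have "in_ball N S (oneS S)" "in_ball N S (\<lambda>x. - oneS S x)"
    using in_ball_unimodular[of 1 N S] in_ball_unimodular[of "-1" N S] by simp_all
  then have "oneS S \<in> ballB FM S" "(\<lambda>x. - oneS S x) \<in> ballB FM S" if "N = FM"
    using that by (simp_all add: ballB_eq)
  then show "oneS S \<in> E_set N S" "(\<lambda>x. - oneS S x) \<in> E_set N S"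
    by (cases N; auto simp: E_set_def oneS_def)+
qed

lemma unimodular_BL_extends_to_E_set:
  assumes e: "in_ball BL P e" "\<forall>x\<in>P. \<bar>e x\<bar> = 1" and "P \<subseteq> S"
  shows "\<exists>g\<in>E_set BL S. \<forall>x\<in>P. g x = e x"
proof (cases "P = {}")
  case False
  then obtain p where p: "p \<in> P" by auto
  have const: "e x = e p" if "x \<in> P" for x using unimodular_BL_constant[OF e that p] .
  have "\<bar>e p\<bar> = 1" using e(2) p by blast
  then consider "e p = 1" | "e p = -1" by linarith
  then show ?thesis
  proof cases
    case 1
    then show ?thesis using const \<open>P \<subseteq> S\<close> by (intro bexI[OF _ constants_in_E_set(1)]) (auto simp: oneS_def)
  next
    case 2
    then show ?thesis using const \<open>P \<subseteq> S\<close> by (intro bexI[OF _ constants_in_E_set(2)]) (auto simp: oneS_def)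
  qed
qed (use constants_in_E_set in blast)

lemma unimodular_FM_extends_to_E_set:
  assumes e: "in_ball FM P e" "\<forall>x\<in>P. \<bar>e x\<bar> = 1" and P: "finite P" "P \<subseteq> S"
  shows "\<exists>g\<in>E_set FM S. \<forall>x\<in>P. g x = e x"
proof -
  define Q where "Q = {x\<in>P. e x = 1}"
  show ?thesis
  proof (cases "Q = {}")
    case True
    have "e x = -1" if "x \<in> P" for x
    proof -
      have "e x \<noteq> 1" using True that unfolding Q_def by blast
      moreover have "\<bar>e x\<bar> = 1" using e(2) that by blast
      ultimately show ?thesis by linarith
    qed
    then show ?thesis using P(2) by (intro bexI[OF _ constants_in_E_set(2)]) (auto simp: oneS_def)
  next
    case False
    have "finite Q" "Q \<subseteq> S" using P by (auto simp: Q_def)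
    then have "hP S Q \<in> E_set FM S" using False by (auto simp: E_set_def)
    then show ?thesis using unimodular_FM_eq_hP[OF e P Q_def False] by blast
  qed
qed

text \<open>The non-trivial extreme points are matched by their extensions, the unimodular ones by \<open>\<plusminus>1\<close> or,
  for \<open>FM\<close>, by \<open>h\<^sub>Q\<close> with \<open>Q\<close> the set where they equal \<open>1\<close>.\<close>

lemma extp_finite_ball_extends_to_E_set:
  assumes P: "finite P" "P \<subseteq> S" and e: "e \<in> extp (ballB N P)"
  shows "\<exists>g\<in>E_set N S. \<forall>x\<in>P. g x = e x"
proof (cases "e \<in> ext_star N P")
  case True
  then have "ext_op S P e \<in> E_set N S" using P by (cases N) (auto simp: E_set_def)
  then show ?thesis
    using ext_op_eq[OF P(1) ext_star_nonempty[OF True] P(2) ext_star_BLsp[OF True]] by blast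
next
  case False
  then have "\<forall>x\<in>P. \<bar>e x\<bar> = 1" using e by (auto simp: ext_star_iff)
  then show ?thesis
    using extp_ballB_in_ball[OF e] unimodular_BL_extends_to_E_set unimodular_FM_extends_to_E_set P
    by (cases N) auto
qed

section \<open>Decompositions over cells\<close>

lemma norm_le_sum:
  assumes "finite J" "\<forall>e\<in>J. 0 \<le> w e" "\<forall>e\<in>J. norm_le N S 1 (g e)"
  shows "norm_le N S (sum w J) (\<lambda>x. \<Sum>e\<in>J. w e * g e x)"
proof -
  have abs: "\<bar>\<Sum>e\<in>J. w e * g e x\<bar> \<le> (\<Sum>e\<in>J. w e * \<bar>g e x\<bar>)" for x
    using sum_abs[of "\<lambda>e. w e * g e x" J] assms(2) by (simp add: abs_mult)
  have diff: "\<bar>(\<Sum>e\<in>J. w e * g e a) - (\<Sum>e\<in>J. w e * g e b)\<bar> \<le> (\<Sum>e\<in>J. w e * \<bar>g e a - g e b\<bar>)" for a b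
  proof -
    have "(\<Sum>e\<in>J. w e * g e a) - (\<Sum>e\<in>J. w e * g e b) = (\<Sum>e\<in>J. w e * (g e a - g e b))"
      by (simp add: sum_subtractf[symmetric] right_diff_distrib)
    then show ?thesis using sum_abs[of "\<lambda>e. w e * (g e a - g e b)" J] assms(2) by (simp add: abs_mult)
  qed
  have weighted: "(\<Sum>e\<in>J. w e * q e) \<le> sum w J * m" if "\<forall>e\<in>J. q e \<le> m" for q m
  proof -
    have "(\<Sum>e\<in>J. w e * q e) \<le> (\<Sum>e\<in>J. w e * m)"
      using that assms(2) by (intro sum_mono mult_left_mono) auto
    then show ?thesis by (simp add: sum_distrib_right)
  qed
  have "\<bar>g e x\<bar> \<le> 1" if "e \<in> J" "x \<in> S" for e x
    using assms(3) that by (simp add: norm_le_def)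
  then have bound: "\<bar>\<Sum>e\<in>J. w e * g e x\<bar> \<le> sum w J" if "x \<in> S" for x
    using abs[of x] weighted[of "\<lambda>e. \<bar>g e x\<bar>" 1] that by fastforce
  show ?thesis
  proof (cases N)
    case FM
    have "\<bar>g e a - g e b\<bar> \<le> dist a b" if "e \<in> J" "a \<in> S" "b \<in> S" for e a b
      using assms(3) that FM by (simp add: norm_le_def)
    then have "\<bar>(\<Sum>e\<in>J. w e * g e a) - (\<Sum>e\<in>J. w e * g e b)\<bar> \<le> sum w J * dist a b"
      if "a \<in> S" "b \<in> S" for a b
      using diff[of a b] weighted[of "\<lambda>e. \<bar>g e a - g e b\<bar>" "dist a b"] that by fastforce
    then show ?thesis using bound FM by (simp add: norm_le_def)
  next
    case BL
    have "\<bar>g e x\<bar> + \<bar>g e a - g e b\<bar> / dist a b \<le> 1"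
      if "e \<in> J" "x \<in> S" "a \<in> S" "b \<in> S" "a \<noteq> b" for e x a b
      using assms(3) that BL by (simp add: norm_le_def)
    then have weighted_BL: "(\<Sum>e\<in>J. w e * (\<bar>g e x\<bar> + \<bar>g e a - g e b\<bar> / dist a b)) \<le> sum w J"
      if "x \<in> S" "a \<in> S" "b \<in> S" "a \<noteq> b" for x a b
      using weighted[of "\<lambda>e. \<bar>g e x\<bar> + \<bar>g e a - g e b\<bar> / dist a b" 1] that by simp
    have "\<bar>\<Sum>e\<in>J. w e * g e x\<bar> + \<bar>(\<Sum>e\<in>J. w e * g e a) - (\<Sum>e\<in>J. w e * g e b)\<bar> / dist a b
        \<le> sum w J" if "x \<in> S" "a \<in> S" "b \<in> S" "a \<noteq> b" for x a b
    proof -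
      have "\<bar>(\<Sum>e\<in>J. w e * g e a) - (\<Sum>e\<in>J. w e * g e b)\<bar> / dist a b
          \<le> (\<Sum>e\<in>J. w e * \<bar>g e a - g e b\<bar>) / dist a b"
        using diff[of a b] by (rule divide_right_mono) simp
      also have "\<dots> = (\<Sum>e\<in>J. w e * (\<bar>g e a - g e b\<bar> / dist a b))" by (simp add: sum_divide_distrib)
      finally have "\<bar>\<Sum>e\<in>J. w e * g e x\<bar> + \<bar>(\<Sum>e\<in>J. w e * g e a) - (\<Sum>e\<in>J. w e * g e b)\<bar> / dist a b
          \<le> (\<Sum>e\<in>J. w e * (\<bar>g e x\<bar> + \<bar>g e a - g e b\<bar> / dist a b))"
        using abs[of x] by (simp add: distrib_left sum.distrib)
      then show ?thesis using weighted_BL[OF that] by linarith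
    qed
    then show ?thesis using bound BL by (simp add: norm_le_def)
  qed
qed

lemma in_ball_divide:
  assumes m: "0 < m" and k: "norm_le N S m k"
  shows "in_ball N S (\<lambda>x. if x \<in> S then k x / m else 0)"
proof -
  have abs: "\<bar>k x / m\<bar> \<le> 1" if "x \<in> S" for x using k m that by (simp add: norm_le_def divide_le_eq_1)
  have diff: "\<bar>k a / m - k b / m\<bar> = \<bar>k a - k b\<bar> / m" for a b
    using m by (simp add: diff_divide_distrib[symmetric])
  show ?thesis
  proof (cases N)
    case FM
    have "\<bar>k a - k b\<bar> / m \<le> dist a b" if "a \<in> S" "b \<in> S" for a b
      using k m that FM by (simp add: norm_le_def divide_le_eq mult.commute)
    then show ?thesis unfolding FM using abs diff by (intro in_ball_FM_I) auto
  next
    case BL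
    have "\<bar>k x / m\<bar> + \<bar>k a / m - k b / m\<bar> / dist a b \<le> 1"
      if "x \<in> S" "a \<in> S" "b \<in> S" "a \<noteq> b" for x a b
    proof -
      have "(\<bar>k x\<bar> + \<bar>k a - k b\<bar> / dist a b) / m \<le> 1" using k m that BL by (simp add: norm_le_def)
      moreover have "(\<bar>k x\<bar> + \<bar>k a - k b\<bar> / dist a b) / m = \<bar>k x / m\<bar> + \<bar>k a / m - k b / m\<bar> / dist a b"
        using m by (simp add: diff add_divide_distrib)
      ultimately show ?thesis by simp
    qed
    then show ?thesis unfolding BL using abs by (intro in_ball_BL_I) auto
  qed
qed

lemma in_ball_convex_comb:
  assumes "finite J" "\<forall>e\<in>J. 0 \<le> w e" "sum w J = 1" "\<forall>e\<in>J. in_ball N S (g e)"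
  shows "in_ball N S (\<lambda>x. \<Sum>e\<in>J. w e * g e x)"
  using norm_le_sum[OF assms(1,2), of N S g] assms(3,4) by (simp add: in_ball_def)

text \<open>Split off one summand and renormalise the rest.\<close>

lemma extp_eq_if_convex_comb:
  assumes f: "f \<in> extp (ballB N S)" and fin: "finite Z" and ne: "Z \<noteq> {}"
    and pos: "\<forall>z\<in>Z. 0 < \<mu> z" and s1: "sum \<mu> Z = 1" and h: "\<forall>z\<in>Z. in_ball N S (h z)"
    and fx: "\<forall>x. f x = (\<Sum>z\<in>Z. \<mu> z * h z x)"
  shows "\<exists>z\<in>Z. f = h z"
proof -
  obtain z0 where z0: "z0 \<in> Z" using ne by auto
  let ?R = "Z - {z0}"
  have split: "(\<Sum>z\<in>Z. k z) = k z0 + (\<Sum>z\<in>?R. k z)" for k :: "_ \<Rightarrow> real"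
    using fin z0 by (simp add: sum.remove)
  show ?thesis
  proof (cases "?R = {}")
    case True
    then have "Z = {z0}" using z0 by auto
    then show ?thesis using fx s1 by (auto simp: fun_eq_iff)
  next
    case False
    then have "0 < sum \<mu> ?R" using fin pos by (intro sum_pos) auto
    define t where "t = \<mu> z0"
    have t: "0 < t" "t < 1" using pos z0 s1 split[of \<mu>] \<open>0 < sum \<mu> ?R\<close> by (auto simp: t_def)
    define rest where "rest x = (\<Sum>z\<in>?R. (\<mu> z / (1 - t)) * h z x)" for x
    have "sum (\<lambda>z. \<mu> z / (1 - t)) ?R = 1"
      using split[of \<mu>] s1 t by (simp add: sum_divide_distrib[symmetric] t_def)
    then have restB: "in_ball N S rest" unfolding rest_def
      using fin pos h t by (intro in_ball_convex_comb) auto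
    have fe: "f x = t * h z0 x + (1 - t) * rest x" for x
      using fx split[of "\<lambda>z. \<mu> z * h z x"] t
      by (simp add: rest_def sum_distrib_left t_def)
    have "h z0 = rest"
      by (rule extpD[OF f _ _ t fe]) (use h z0 restB in \<open>auto simp: ballB_eq\<close>)
    then have "f = h z0" using fe by (auto simp: fun_eq_iff algebra_simps)
    then show ?thesis using z0 by blast
  qed
qed

text \<open>\<open>G (z, None)\<close> is the weight of the cell \<open>z\<close> and \<open>G (z, Some x)\<close> is that weight times the value at \<open>x\<close>
  of an element of \<open>B\<^sub>S\<close> lying within \<open>r\<close> of \<open>z\<close> on \<open>F\<close>. Packing all of this into a single real family makes
  the set of such decompositions a closed subset of a product of intervals.\<close>

definition cell_decomposition :: "bl_norm \<Rightarrow> 'a::metric_space set \<Rightarrow> ('a \<Rightarrow> real) set \<Rightarrow> 'a set \<Rightarrow> real \<Rightarrow>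
    (('a \<Rightarrow> real) \<times> 'a option \<Rightarrow> real) \<Rightarrow> bool" where
  "cell_decomposition N S Z F r G \<longleftrightarrow>
     (\<forall>z\<in>Z. 0 \<le> G (z, None)) \<and> (\<Sum>z\<in>Z. G (z, None)) = 1 \<and>
     (\<forall>z\<in>Z. norm_le N S (G (z, None)) (\<lambda>x. G (z, Some x))) \<and>
     (\<forall>z\<in>Z. \<forall>y\<in>F. \<bar>G (z, Some y) - G (z, None) * z y\<bar> \<le> G (z, None) * r)"

lemma closed_Collect_ball: "(\<And>i. i \<in> I \<Longrightarrow> closed {x. P i x}) \<Longrightarrow> closed {x. \<forall>i\<in>I. P i x}"
proof -
  assume "\<And>i. i \<in> I \<Longrightarrow> closed {x. P i x}"
  moreover have "{x. \<forall>i\<in>I. P i x} = UNIV \<inter> (\<Inter>i\<in>I. {x. P i x})" by auto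
  ultimately show ?thesis by (metis closed_INT closed_Int closed_UNIV)
qed

lemma closed_cell_decomposition:
  assumes "finite Z" shows "closed {G. cell_decomposition N S Z F r G}"
  unfolding cell_decomposition_def norm_le_def divide_inverse using assms
  by (cases N; simp only: bl_norm.case;
      intro closed_Collect_conj closed_Collect_ball closed_Collect_le closed_Collect_eq
        closed_Collect_imp open_Collect_const continuous_intros continuous_on_product_coordinates)

lemma convex_comb_cell_decomposition:
  fixes g :: "'i \<Rightarrow> 'a::metric_space \<Rightarrow> real"
  assumes I: "finite I" "\<forall>e\<in>I. 0 \<le> w e" "sum w I = 1" and Z: "finite Z"
    and g: "\<forall>e\<in>I. in_ball N S (g e)" "\<forall>e\<in>I. cell (g e) \<in> Z"
    and cell: "\<forall>e\<in>I. \<forall>y\<in>F. \<bar>g e y - cell (g e) y\<bar> \<le> r"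
  shows "\<exists>G. (\<forall>i. \<bar>G i\<bar> \<le> 1) \<and> cell_decomposition N S Z F r G \<and>
           (\<forall>x. (\<Sum>z\<in>Z. G (z, Some x)) = (\<Sum>e\<in>I. w e * g e x))"
proof -
  define J where "J z = {e\<in>I. cell (g e) = z}" for z
  have J: "finite (J z)" "J z \<subseteq> I" for z using I(1) by (auto simp: J_def)
  define G where "G = (\<lambda>(z, ox). case ox of None \<Rightarrow> (\<Sum>e\<in>J z. w e) | Some x \<Rightarrow> (\<Sum>e\<in>J z. w e * g e x))"
  have G: "G (z, None) = (\<Sum>e\<in>J z. w e)" "G (z, Some x) = (\<Sum>e\<in>J z. w e * g e x)" for z x
    by (simp_all add: G_def)
  have weight: "0 \<le> G (z, None)" "G (z, None) \<le> 1" for z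
    using J[of z] I sum_mono2[OF I(1) J(2)[of z], of w] by (auto simp: G intro: sum_nonneg)
  have norm: "norm_le N S (G (z, None)) (\<lambda>x. G (z, Some x))" for z
    unfolding G using J[of z] I(2) g(1) by (intro norm_le_sum) (auto simp: in_ball_def)
  have group: "(\<Sum>z\<in>Z. \<Sum>e\<in>J z. h e) = (\<Sum>e\<in>I. h e)" for h :: "'i \<Rightarrow> real"
    unfolding J_def using g(2) by (intro sum.group[OF I(1) Z]) auto
  have "\<bar>G (z, Some x)\<bar> \<le> G (z, None)" for z x
  proof -
    have "\<bar>G (z, Some x)\<bar> \<le> (\<Sum>e\<in>J z. \<bar>w e * g e x\<bar>)" unfolding G by (rule sum_abs)
    also have "\<dots> \<le> (\<Sum>e\<in>J z. w e)"
    proof (rule sum_mono)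
      fix e assume "e \<in> J z"
      then have "e \<in> I" using J(2) by blast
      then have "0 \<le> w e" "\<bar>g e x\<bar> \<le> 1" using I(2) g(1) by (auto intro: in_ball_abs_le)
      then show "\<bar>w e * g e x\<bar> \<le> w e" by (simp add: abs_mult mult_left_le)
    qed
    finally show ?thesis by (simp add: G)
  qed
  then have "\<bar>G (z, ox)\<bar> \<le> 1" for z ox using weight[of z] by (cases ox) (auto intro: order_trans)
  then have "\<forall>i. \<bar>G i\<bar> \<le> 1" by auto
  moreover have "\<bar>G (z, Some y) - G (z, None) * z y\<bar> \<le> G (z, None) * r" if "y \<in> F" for z y
  proof -
    have "G (z, Some y) - G (z, None) * z y = (\<Sum>e\<in>J z. w e * (g e y - z y))"
      by (simp add: G sum_distrib_right right_diff_distrib sum_subtractf)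
    also have "\<bar>\<dots>\<bar> \<le> (\<Sum>e\<in>J z. w e * r)"
      using sum_abs[of "\<lambda>e. w e * (g e y - z y)" "J z"] cell that I(2) J(2)[of z]
      by (fastforce simp: J_def abs_mult intro: order_trans sum_mono mult_left_mono)
    finally show ?thesis by (simp add: G sum_distrib_right)
  qed
  moreover have "(\<Sum>z\<in>Z. G (z, None)) = 1" using group[of w] I(3) by (simp add: G)
  moreover have "(\<Sum>z\<in>Z. G (z, Some x)) = (\<Sum>e\<in>I. w e * g e x)" for x using group by (simp add: G)
  ultimately show ?thesis using weight(1) norm
    by (intro exI[of _ G]) (auto simp: cell_decomposition_def)
qed

lemma finite_cell_decomposition:
  assumes f: "in_ball N S f" and P: "finite P" "P \<subseteq> S" and Z: "finite Z"
    and cell: "\<forall>g\<in>E_set N S. cell g \<in> Z" "\<forall>g\<in>E_set N S. \<forall>y\<in>F. \<bar>g y - cell g y\<bar> \<le> r"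
  shows "\<exists>G. (\<forall>i. \<bar>G i\<bar> \<le> 1) \<and> cell_decomposition N S Z F r G \<and> (\<forall>x\<in>P. f x = (\<Sum>z\<in>Z. G (z, Some x)))"
proof -
  define fP where "fP = (\<lambda>x. if x \<in> P then f x else 0)"
  have "fP \<in> ballB N P" using in_ball_restrict[OF f P(2)] by (simp add: fP_def ballB_eq)
  then have "fP \<in> convex_combs (extp (ballB N P))" using ballB_subset_convex_combs_extp[OF P(1)] by blast
  then obtain I w where I: "finite I" "I \<subseteq> extp (ballB N P)" "\<forall>e\<in>I. 0 \<le> w e" "sum w I = 1"
    "\<forall>x. fP x = (\<Sum>e\<in>I. w e * e x)" unfolding convex_combs_def by blast
  have "\<forall>e\<in>I. \<exists>g. g \<in> E_set N S \<and> (\<forall>x\<in>P. g x = e x)"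
    using extp_finite_ball_extends_to_E_set[OF P] I(2) by blast
  then have "\<exists>ge. \<forall>e\<in>I. ge e \<in> E_set N S \<and> (\<forall>x\<in>P. ge e x = e x)" by (rule bchoice)
  then obtain ge where "\<forall>e\<in>I. ge e \<in> E_set N S \<and> (\<forall>x\<in>P. ge e x = e x)" ..
  then have ge: "\<forall>e\<in>I. ge e \<in> E_set N S" "\<forall>e\<in>I. \<forall>x\<in>P. ge e x = e x" by simp_all
  have "\<forall>e\<in>I. in_ball N S (ge e)" "\<forall>e\<in>I. cell (ge e) \<in> Z"
    "\<forall>e\<in>I. \<forall>y\<in>F. \<bar>ge e y - cell (ge e) y\<bar> \<le> r"
    using ge(1) E_set_in_ball cell by auto
  from convex_comb_cell_decomposition[OF I(1,3,4) Z this]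
  obtain G where G: "\<forall>i. \<bar>G i\<bar> \<le> 1" "cell_decomposition N S Z F r G"
    "\<forall>x. (\<Sum>z\<in>Z. G (z, Some x)) = (\<Sum>e\<in>I. w e * ge e x)" by blast
  have "f x = (\<Sum>z\<in>Z. G (z, Some x))" if "x \<in> P" for x
  proof -
    have "(\<Sum>e\<in>I. w e * ge e x) = (\<Sum>e\<in>I. w e * e x)" using ge(2) that by (intro sum.cong) auto
    then show ?thesis using G(3) I(5)[rule_format, of x] that by (simp add: fP_def)
  qed
  then show ?thesis using G(1,2) by blast
qed

text \<open>Tychonoff: the decompositions of \<open>f\<close> on the finite subsets of \<open>S\<close> form closed subsets of a compact
  product of intervals with the finite intersection property.\<close>

lemma in_ball_cell_decomposition:
  assumes f: "in_ball N S f" and Z: "finite Z"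
    and cell: "\<forall>g\<in>E_set N S. cell g \<in> Z" "\<forall>g\<in>E_set N S. \<forall>y\<in>F. \<bar>g y - cell g y\<bar> \<le> r"
  shows "\<exists>G. cell_decomposition N S Z F r G \<and> (\<forall>x\<in>S. f x = (\<Sum>z\<in>Z. G (z, Some x)))"
proof -
  define Box where "Box = {G :: ('a \<Rightarrow> real) \<times> 'a option \<Rightarrow> real. \<forall>i. \<bar>G i\<bar> \<le> 1}"
  have "compactin (product_topology (\<lambda>_. euclidean) UNIV) (PiE UNIV (\<lambda>_. {-1..1::real}))"
    by (simp add: compactin_PiE)
  moreover have "Box = PiE UNIV (\<lambda>_. {-1..1::real})" by (auto simp: Box_def abs_le_iff)
  ultimately have "compact Box" by (simp only: euclidean_product_topology compactin_euclidean_iff)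
  then have "compact (Box \<inter> {G. cell_decomposition N S Z F r G})"
    using closed_cell_decomposition[OF Z] by blast
  moreover have "closed {G. f x = (\<Sum>z\<in>Z. G (z, Some x))}" for x
    by (intro closed_Collect_eq continuous_intros) simp_all
  moreover have "Box \<inter> {G. cell_decomposition N S Z F r G} \<inter> (\<Inter>x\<in>P. {G. f x = (\<Sum>z\<in>Z. G (z, Some x))}) \<noteq> {}"
    if P: "finite P" "P \<subseteq> S" for P
  proof -
    obtain G where "\<forall>i. \<bar>G i\<bar> \<le> 1" "cell_decomposition N S Z F r G" "\<forall>x\<in>P. f x = (\<Sum>z\<in>Z. G (z, Some x))"
      using finite_cell_decomposition[OF f P Z cell] by blast
    then have "G \<in> Box \<inter> {G. cell_decomposition N S Z F r G} \<inter> (\<Inter>x\<in>P. {G. f x = (\<Sum>z\<in>Z. G (z, Some x))})"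
      by (simp add: Box_def)
    then show ?thesis by blast
  qed
  ultimately have "Box \<inter> {G. cell_decomposition N S Z F r G} \<inter> (\<Inter>x\<in>S. {G. f x = (\<Sum>z\<in>Z. G (z, Some x))}) \<noteq> {}"
    by (rule compact_imp_fip_image)
  then show ?thesis by blast
qed

lemma extp_eq_cell_component:
  assumes f: "f \<in> extp (ballB N S)" and Z: "finite Z"
    and G: "cell_decomposition N S Z F r G" "\<forall>x\<in>S. f x = (\<Sum>z\<in>Z. G (z, Some x))"
  shows "\<exists>z\<in>Z. 0 < G (z, None) \<and> (\<forall>x\<in>S. f x = G (z, Some x) / G (z, None))"
proof -
  define Z' where "Z' = {z\<in>Z. 0 < G (z, None)}"
  have Z': "finite Z'" "Z' \<subseteq> Z" using Z by (auto simp: Z'_def)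
  have G0: "0 \<le> G (z, None)" "norm_le N S (G (z, None)) (\<lambda>x. G (z, Some x))" if "z \<in> Z" for z
    using G(1) that by (auto simp: cell_decomposition_def)
  have null: "G (z, None) = 0" "\<forall>x\<in>S. G (z, Some x) = 0" if "z \<in> Z - Z'" for z
    using G0[of z] that by (auto simp: Z'_def norm_le_def)
  have "(\<Sum>z\<in>Z'. G (z, None)) = (\<Sum>z\<in>Z. G (z, None))"
    using null by (intro sum.mono_neutral_left[OF Z(1) Z'(2)]) auto
  then have s1: "(\<Sum>z\<in>Z'. G (z, None)) = 1" using G(1) by (simp add: cell_decomposition_def)
  define h where "h z x = (if x \<in> S then G (z, Some x) / G (z, None) else 0)" for z x
  have hB: "\<forall>z\<in>Z'. in_ball N S (h z)"
    unfolding h_def[abs_def] using G0 Z'(2) by (auto simp: Z'_def intro: in_ball_divide)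
  have fx: "\<forall>x. f x = (\<Sum>z\<in>Z'. G (z, None) * h z x)"
  proof
    fix x show "f x = (\<Sum>z\<in>Z'. G (z, None) * h z x)"
    proof (cases "x \<in> S")
      case True
      have "(\<Sum>z\<in>Z. G (z, Some x)) = (\<Sum>z\<in>Z'. G (z, Some x))"
        by (rule sum.mono_neutral_right[OF Z(1) Z'(2)]) (use null True in auto)
      also have "\<dots> = (\<Sum>z\<in>Z'. G (z, None) * h z x)"
        using True by (intro sum.cong) (auto simp: h_def Z'_def)
      finally show ?thesis using G(2) True by simp
    qed (simp add: h_def in_ball_vanishes[OF extp_ballB_in_ball[OF f]])
  qed
  have "Z' \<noteq> {}" using s1 by auto
  moreover have "\<forall>z\<in>Z'. 0 < G (z, None)" by (simp add: Z'_def)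
  ultimately obtain z where "z \<in> Z'" "f = h z"
    using extp_eq_if_convex_comb[OF f Z'(1) _ _ s1 hB fx] by blast
  then show ?thesis using Z'(2) by (auto simp: Z'_def h_def)
qed

lemma extp_near_E_set:
  assumes f: "f \<in> extp (ballB N S)" and Z: "finite Z" and F: "F \<subseteq> S"
    and near: "\<forall>z\<in>Z. \<exists>g\<in>E_set N S. \<forall>y\<in>F. \<bar>g y - z y\<bar> \<le> r"
    and G: "cell_decomposition N S Z F r G" "\<forall>x\<in>S. f x = (\<Sum>z\<in>Z. G (z, Some x))"
  shows "\<exists>g\<in>E_set N S. \<forall>y\<in>F. \<bar>g y - f y\<bar> \<le> 2 * r"
proof -
  obtain z where z: "z \<in> Z" "0 < G (z, None)" "\<forall>x\<in>S. f x = G (z, Some x) / G (z, None)"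
    using extp_eq_cell_component[OF f Z G] by blast
  obtain g where g: "g \<in> E_set N S" "\<forall>y\<in>F. \<bar>g y - z y\<bar> \<le> r" using near z(1) by blast
  have "\<bar>f y - z y\<bar> \<le> r" if "y \<in> F" for y
  proof -
    have "\<bar>G (z, Some y) - G (z, None) * z y\<bar> \<le> G (z, None) * r"
      using G(1) z(1) that by (auto simp: cell_decomposition_def)
    moreover have "G (z, Some y) - G (z, None) * z y = G (z, None) * (f y - z y)"
      using z(2,3) that F by (auto simp: field_simps)
    ultimately show ?thesis using z(2) by (simp add: abs_mult)
  qed
  then show ?thesis using g by (force simp: abs_le_iff)
qed

section \<open>Density\<close>

lemma abs_sub_floor_grid_le:
  fixes r v :: real assumes "0 < r"
  shows "\<bar>v - r * of_int \<lfloor>v / r\<rfloor>\<bar> \<le> r"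
proof -
  have "r * of_int \<lfloor>v / r\<rfloor> \<le> r * (v / r)" "r * (v / r) \<le> r * (of_int \<lfloor>v / r\<rfloor> + 1)"
    using assms by (intro mult_left_mono; linarith)+
  then show ?thesis using assms by (auto simp: abs_le_iff algebra_simps)
qed

lemma floor_divide_mem_grid:
  fixes r v :: real assumes "0 < r" "\<bar>v\<bar> \<le> 1"
  shows "\<lfloor>v / r\<rfloor> \<in> {-\<lceil>1 / r\<rceil>..\<lceil>1 / r\<rceil>}"
proof -
  have "- (1 / r) \<le> v / r" "v / r \<le> 1 / r"
    using assms divide_right_mono[of "-1" v r] divide_right_mono[of v 1 r] by (auto simp: abs_le_iff)
  then have "\<lfloor>- (1 / r)\<rfloor> \<le> \<lfloor>v / r\<rfloor>" "\<lfloor>v / r\<rfloor> \<le> \<lfloor>1 / r\<rfloor>" by (auto intro: floor_mono)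
  then show ?thesis using floor_le_ceiling[of "1 / r"] by (simp add: ceiling_def)
qed

lemma finite_functions_supported_on:
  assumes "finite F" "finite V"
  shows "finite {z :: 'a \<Rightarrow> 'b::zero. \<forall>x. (x \<in> F \<longrightarrow> z x \<in> V) \<and> (x \<notin> F \<longrightarrow> z x = 0)}"
proof -
  have "{z. \<forall>x. (x \<in> F \<longrightarrow> z x \<in> V) \<and> (x \<notin> F \<longrightarrow> z x = 0)}
      \<subseteq> (\<lambda>p x. if x \<in> F then p x else 0) ` PiE F (\<lambda>_. V)"
  proof
    fix z assume z: "z \<in> {z. \<forall>x. (x \<in> F \<longrightarrow> z x \<in> V) \<and> (x \<notin> F \<longrightarrow> z x = 0)}"
    then have "z = (\<lambda>x. if x \<in> F then restrict z F x else 0)" by (auto simp: fun_eq_iff)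
    moreover have "restrict z F \<in> PiE F (\<lambda>_. V)" using z by auto
    ultimately show "z \<in> (\<lambda>p x. if x \<in> F then p x else 0) ` PiE F (\<lambda>_. V)" by blast
  qed
  moreover have "finite (PiE F (\<lambda>_. V))" using assms by (simp add: finite_PiE)
  ultimately show ?thesis by (meson finite_imageI finite_subset)
qed

text \<open>Rounding the values on \<open>F\<close> to the grid \<open>r\<int>\<close> sorts the elements of \<open>E\<^sub>S\<close> into finitely many cells.\<close>

lemma extp_approx_on_finite:
  assumes f: "f \<in> extp (ballB N S)" and F: "finite F" "F \<subseteq> S" and "0 < \<delta>"
  shows "\<exists>g\<in>E_set N S. \<forall>x\<in>F. \<bar>g x - f x\<bar> < \<delta>"
proof -
  define r where "r = \<delta> / 4"
  have r: "0 < r" using \<open>0 < \<delta>\<close> by (simp add: r_def)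
  define cell where "cell g = (\<lambda>x. if x \<in> F then r * of_int \<lfloor>g x / r\<rfloor> else 0)" for g :: "'a \<Rightarrow> real"
  define Z where "Z = cell ` E_set N S"
  have "Z \<subseteq> {z. \<forall>x. (x \<in> F \<longrightarrow> z x \<in> (\<lambda>k. r * of_int k) ` {-\<lceil>1 / r\<rceil>..\<lceil>1 / r\<rceil>}) \<and> (x \<notin> F \<longrightarrow> z x = 0)}"
    using floor_divide_mem_grid[OF r] E_set_in_ball in_ball_abs_le by (fastforce simp: Z_def cell_def)
  then have Z: "finite Z" by (rule finite_subset) (simp add: finite_functions_supported_on[OF F(1)])
  have cell: "\<forall>g\<in>E_set N S. cell g \<in> Z" "\<forall>g\<in>E_set N S. \<forall>y\<in>F. \<bar>g y - cell g y\<bar> \<le> r"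
    using abs_sub_floor_grid_le[OF r] by (auto simp: Z_def cell_def)
  then have near: "\<forall>z\<in>Z. \<exists>g\<in>E_set N S. \<forall>y\<in>F. \<bar>g y - z y\<bar> \<le> r" by (auto simp: Z_def)
  obtain G where "cell_decomposition N S Z F r G" "\<forall>x\<in>S. f x = (\<Sum>z\<in>Z. G (z, Some x))"
    using in_ball_cell_decomposition[OF extp_ballB_in_ball[OF f] Z cell] by blast
  then obtain g where "g \<in> E_set N S" "\<forall>y\<in>F. \<bar>g y - f y\<bar> \<le> 2 * r"
    using extp_near_E_set[OF f Z F(2) near] by blast
  moreover have "2 * r < \<delta>" using \<open>0 < \<delta>\<close> by (simp add: r_def)
  ultimately show ?thesis by force
qed

lemma predual_continuous_on_finite:
  assumes \<phi>: "\<phi> \<in> predual N S" and "0 < \<epsilon>"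
  shows "\<exists>F \<delta>. finite F \<and> F \<subseteq> S \<and> 0 < \<delta> \<and>
    (\<forall>f\<in>ballB N S. \<forall>g\<in>ballB N S. (\<forall>y\<in>F. \<bar>g y - f y\<bar> < \<delta>) \<longrightarrow> \<bar>\<phi> g - \<phi> f\<bar> < \<epsilon>)"
proof -
  have approx: "\<forall>\<epsilon>>0. \<exists>F c. finite F \<and> F \<subseteq> S \<and> (\<forall>f\<in>ballB N S. \<bar>\<phi> f - (\<Sum>y\<in>F. c y * f y)\<bar> \<le> \<epsilon>)"
    using \<phi> by (simp add: predual_def)
  have "0 < \<epsilon> / 3" using \<open>0 < \<epsilon>\<close> by simp
  from approx[rule_format, OF this] obtain F c where F: "finite F" "F \<subseteq> S"
    and c: "\<forall>f\<in>ballB N S. \<bar>\<phi> f - (\<Sum>y\<in>F. c y * f y)\<bar> \<le> \<epsilon> / 3"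
    by blast
  define M where "M = 1 + (\<Sum>y\<in>F. \<bar>c y\<bar>)"
  have M: "1 \<le> M" by (simp add: M_def sum_nonneg)
  define \<delta> where "\<delta> = \<epsilon> / (3 * M)"
  have \<delta>: "0 < \<delta>" "M * \<delta> = \<epsilon> / 3" using \<open>0 < \<epsilon>\<close> M by (auto simp: \<delta>_def)
  have "\<bar>\<phi> g - \<phi> f\<bar> < \<epsilon>"
    if fg: "f \<in> ballB N S" "g \<in> ballB N S" "\<forall>y\<in>F. \<bar>g y - f y\<bar> < \<delta>" for f g
  proof -
    have "\<bar>(\<Sum>y\<in>F. c y * g y) - (\<Sum>y\<in>F. c y * f y)\<bar> = \<bar>\<Sum>y\<in>F. c y * (g y - f y)\<bar>"
      by (simp add: sum_subtractf[symmetric] right_diff_distrib)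
    also have "\<dots> \<le> (\<Sum>y\<in>F. \<bar>c y\<bar> * \<delta>)"
      using fg(3) by (intro order_trans[OF sum_abs] sum_mono) (auto simp: abs_mult mult_left_mono less_imp_le)
    also have "\<dots> = (M - 1) * \<delta>" by (simp add: M_def sum_distrib_right)
    also have "\<dots> < \<epsilon> / 3" using \<delta> by (simp add: left_diff_distrib)
    finally have "\<bar>(\<Sum>y\<in>F. c y * g y) - (\<Sum>y\<in>F. c y * f y)\<bar> < \<epsilon> / 3" .
    moreover have "\<bar>\<phi> g - (\<Sum>y\<in>F. c y * g y)\<bar> \<le> \<epsilon> / 3" "\<bar>\<phi> f - (\<Sum>y\<in>F. c y * f y)\<bar> \<le> \<epsilon> / 3"
      using c fg(1,2) by auto
    ultimately show ?thesis unfolding abs_le_iff abs_less_iff by linarith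
  qed
  then show ?thesis using F \<delta>(1) by blast
qed

lemma wstar_dense_E_set: "wstar_dense_in N S (E_set N S) (extp (ballB N S))"
  unfolding wstar_dense_in_def
proof (intro ballI allI impI)
  fix f and \<Phi> :: "(('a \<Rightarrow> real) \<Rightarrow> real) set" and \<epsilon> :: real
  assume f: "f \<in> extp (ballB N S)" and \<Phi>: "finite \<Phi> \<and> \<Phi> \<subseteq> predual N S" and "0 < \<epsilon>"
  have "\<forall>\<phi>\<in>\<Phi>. \<exists>F \<delta>. finite F \<and> F \<subseteq> S \<and> 0 < \<delta> \<and>
    (\<forall>f\<in>ballB N S. \<forall>g\<in>ballB N S. (\<forall>y\<in>F. \<bar>g y - f y\<bar> < \<delta>) \<longrightarrow> \<bar>\<phi> g - \<phi> f\<bar> < \<epsilon>)"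
  proof
    fix \<phi> assume "\<phi> \<in> \<Phi>"
    then have "\<phi> \<in> predual N S" using \<Phi> by blast
    then show "\<exists>F \<delta>. finite F \<and> F \<subseteq> S \<and> 0 < \<delta> \<and>
      (\<forall>f\<in>ballB N S. \<forall>g\<in>ballB N S. (\<forall>y\<in>F. \<bar>g y - f y\<bar> < \<delta>) \<longrightarrow> \<bar>\<phi> g - \<phi> f\<bar> < \<epsilon>)"
      using \<open>0 < \<epsilon>\<close> by (rule predual_continuous_on_finite)
  qed
  from bchoice[OF this] obtain Fs where "\<forall>\<phi>\<in>\<Phi>. \<exists>\<delta>. finite (Fs \<phi>) \<and> Fs \<phi> \<subseteq> S \<and> 0 < \<delta> \<and>
    (\<forall>f\<in>ballB N S. \<forall>g\<in>ballB N S. (\<forall>y\<in>Fs \<phi>. \<bar>g y - f y\<bar> < \<delta>) \<longrightarrow> \<bar>\<phi> g - \<phi> f\<bar> < \<epsilon>)" ..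
  from bchoice[OF this] obtain \<delta>s where F\<delta>: "\<forall>\<phi>\<in>\<Phi>. finite (Fs \<phi>) \<and> Fs \<phi> \<subseteq> S \<and> 0 < \<delta>s \<phi> \<and>
    (\<forall>f\<in>ballB N S. \<forall>g\<in>ballB N S. (\<forall>y\<in>Fs \<phi>. \<bar>g y - f y\<bar> < \<delta>s \<phi>) \<longrightarrow> \<bar>\<phi> g - \<phi> f\<bar> < \<epsilon>)" ..
  define F where "F = (\<Union>\<phi>\<in>\<Phi>. Fs \<phi>)"
  define \<delta> where "\<delta> = Min (insert 1 (\<delta>s ` \<Phi>))"
  have "finite F" "F \<subseteq> S" "0 < \<delta>" using F\<delta> \<Phi> by (auto simp: F_def \<delta>_def)
  then obtain g where g: "g \<in> E_set N S" "\<forall>x\<in>F. \<bar>g x - f x\<bar> < \<delta>"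
    using extp_approx_on_finite[OF f] by blast
  have "\<bar>\<phi> g - \<phi> f\<bar> < \<epsilon>" if "\<phi> \<in> \<Phi>" for \<phi>
  proof -
    have "\<delta> \<le> \<delta>s \<phi>" using \<Phi> that by (auto simp: \<delta>_def)
    then have "\<forall>y\<in>Fs \<phi>. \<bar>g y - f y\<bar> < \<delta>s \<phi>" using g(2) that by (force simp: F_def)
    moreover have "f \<in> ballB N S" "g \<in> ballB N S"
      using extp_mem[OF f] E_set_in_ball[OF g(1)] by (auto simp: ballB_eq)
    ultimately show ?thesis using F\<delta> that by blast
  qed
  then show "\<exists>g\<in>E_set N S. \<forall>\<phi>\<in>\<Phi>. \<bar>\<phi> g - \<phi> f\<bar> < \<epsilon>" using g(1) by blast
qed

text \<open>On a compact space, closeness on a finite \<open>\<epsilon>/4\<close>-net propagates to closeness everywhere, since all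
  elements of the unit ball are 1-Lipschitz.\<close>

lemma sup_dense_E_set:
  assumes "compact S"
  shows "sup_dense_in S (E_set N S) (extp (ballB N S))"
  unfolding sup_dense_in_def
proof (intro ballI allI impI)
  fix f and \<epsilon> :: real assume f: "f \<in> extp (ballB N S)" and "0 < \<epsilon>"
  have "0 < \<epsilon> / 4" using \<open>0 < \<epsilon>\<close> by simp
  from seq_compact_imp_totally_bounded[OF compact_imp_seq_compact[OF assms], rule_format, OF this]
  obtain k where k: "finite k" "k \<subseteq> S" "S \<subseteq> (\<Union>x\<in>k. ball x (\<epsilon> / 4))" by blast
  obtain g where g: "g \<in> E_set N S" "\<forall>x\<in>k. \<bar>g x - f x\<bar> < \<epsilon> / 4"
    using extp_approx_on_finite[OF f k(1,2) \<open>0 < \<epsilon> / 4\<close>] by blast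
  have "\<bar>f x - g x\<bar> < \<epsilon>" if x: "x \<in> S" for x
  proof -
    obtain y where y: "y \<in> k" "dist y x < \<epsilon> / 4" using k(3) x by auto
    have yS: "y \<in> S" using y(1) k(2) by blast
    have "\<bar>f x - f y\<bar> \<le> dist x y" by (rule in_ball_lipschitz[OF extp_ballB_in_ball[OF f] x yS])
    moreover have "\<bar>g y - g x\<bar> \<le> dist y x" by (rule in_ball_lipschitz[OF E_set_in_ball[OF g(1)] yS x])
    moreover have "\<bar>g y - f y\<bar> < \<epsilon> / 4" using g(2) y(1) by blast
    ultimately show ?thesis using y(2) dist_commute[of x y] unfolding abs_le_iff abs_less_iff by linarith
  qed
  then show "\<exists>g\<in>E_set N S. \<forall>x\<in>S. \<bar>f x - g x\<bar> < \<epsilon>" using g(1) by blast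
qed

theorem theorem5p5:
  fixes S :: "'a::metric_space set" and N :: bl_norm
  shows "E_set N S \<subseteq> extp (ballB N S) \<and>
         wstar_dense_in N S (E_set N S) (extp (ballB N S)) \<and>
         (compact S \<longrightarrow> sup_dense_in S (E_set N S) (extp (ballB N S)))"
  using E_set_subset_extp wstar_dense_E_set sup_dense_E_set by blast

end
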